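(* In iTML, suppose $T :: \sigma,\nu,M \Rightarrow \nu',S$ and $(\mu,R), (\mu',R') \sqsubseteq (\nu',S)$. Then $\mathsf{bwd}_T(\mu \sqcup \mu', R \sqcup R') = \mathsf{bwd}_T(\mu,R) \sqcup \mathsf{bwd}_T(\mu',R')$, where $\mathsf{bwd}_T : \mathrm{Prefix}(\nu',S) \to \mathrm{Prefix}(\sigma,\nu,M,T)$ sends $(\mu_1,R_1)$ to the unique $(\rho,\mu_0,N,U)$ with $\mu_1,R_1,T \searrow \rho,\mu_0,N,U$.
   Context: Partial syntax of iTML ($\Box$ a hole). Expressions $e ::= x \mid () \mid \mathsf{inl}\,e \mid \mathsf{inr}\,e \mid (e_1,e_2) \mid \mathsf{fst}\,e \mid \mathsf{snd}\,e \mid \mathsf{fun}\,f(x).M \mid \Box$. Computations $M ::= \mathsf{return}\,e \mid \mathsf{let}\,x = M_1\,\mathsf{in}\,M_2 \mid e_1\,e_2 \mid \mathsf{case}\,e\,\mathsf{of}\,\{\mathsf{inl}\,x \to M_1; \mathsf{inr}\,y \to M_2\} \mid \mathsf{raise}\,e \mid \mathsf{try}\,M_1\,\mathsf{with}\,x \to M_2 \mid \mathsf{ref}\,e \mid e_1 := e_2 \mid !e \mid \Box$. Values $v ::= () \mid \mathsf{inl}\,v \mid \mathsf{inr}\,v \mid (v_1,v_2) \mid \langle\rho,\mathsf{fun}\,f(x).M\rangle \mid \ell \mid \Box$. Environments $\rho$ / stores $\mu$: finitely supported maps from variables / locations to values, regarded as total with value $\Box$ off their domain; $\rho[x\mapsto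 v]$ extends, $\mu[\ell\mapsto v]$ updates; $\Box$ also denotes the everywhere-$\Box$ environment, $\Box[x\mapsto v]$ the environment that is $\Box$ except at $x$, and $[\ell\mapsto v]$ the store that is $\Box$ except at $\ell$. Outcomes $k ::= \mathsf{val}\mid\mathsf{exn}$; results $R ::= k\,v$. Traces $T ::= \mathsf{return}\,e \mid \mathsf{let_F}(T) \mid \mathsf{let_S}(T_1,x.T_2) \mid \mathsf{app}(e_1,e_2,f.x.T) \mid \mathsf{caseL}(e,x.T,y) \mid \mathsf{caseR}(e,x,y.T) \mid \mathsf{raise}\,e \mid \mathsf{try_S}(T) \mid \mathsf{try_F}(T_1,x.T_2) \mid \mathsf{ref}_\ell\,e \mid e_1:=_\ell e_2 \mid !_\ell\,e \mid \Box^k_{\mathcal{L}}$ ($\mathcal{L}$ a finite set of locations). $\mathsf{writes}(T)$: $\mathcal{L}$ for $\Box^k_{\mathcal{L}}$; $\emptyset$ for $\mathsf{return}\,e,\mathsf{raise}\,e,!_\ell e$; $\{\ell\}$ for $\mathsf{ref}_\ell e$, $e_1:=_\ell e_2$; union of both subtraces for $\mathsf{let_S}$, $\mathsf{try_F}$; that of the unique subtrace for $\mathsf{let_F},\mathsf{try_S},\mathsf{app},\mathsf{caseL},\mathsf{caseR}$. $\mathsf{outcome}(T)$: $k$ for $\Box^k_{\mathcal{L}}$; $\mathsf{val}$ for $\mathsf{return},\mathsf{try_S},\mathsf{ref}_\ell,:=_\ell,!_\ell$; $\mathsf{exn}$ for $\mathsf{let_F},\mathsf{raise}$; outcome of $T_2$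 for $\mathsf{let_S}(T_1,x.T_2),\mathsf{try_F}(T_1,x.T_2)$; outcome of the subtrace for $\mathsf{app},\mathsf{caseL},\mathsf{caseR}$. Order $\sqsubseteq$: on expressions, computations, values the least order with $\Box\sqsubseteq t$ closed under constructors componentwise; $k\,v\sqsubseteq k\,v'$ iff $v\sqsubseteq v'$ (same $k$); pointwise on environments and stores; on traces the least order containing $\Box^k_{\mathcal{L}}\sqsubseteq T$ whenever $\mathsf{writes}(T)=\mathcal{L}$ and $\mathsf{outcome}(T)=k$, closed under trace constructors componentwise; componentwise on tuples. $\mathrm{Prefix}(t)=\{t'\mid t'\sqsubseteq t\}$, a lattice with join $\sqcup$. Store erasure: $\mu\triangleleft\mathcal{L}$ is $\mu$ with every $\ell\in\mathcal{L}$ mapped to $\Box$. Evaluation (hole-free): $\rho,x\Rightarrow\rho(x)$; $()\Rightarrow()$; $\mathsf{fun}\,f(x).M\Rightarrow\langle\rho,\mathsf{fun}\,f(x).M\rangle$; $\mathsf{inl},\mathsf{inr}$, pairs componentwise; $\mathsf{fst},\mathsf{snd}$ project. $\mathsf{return}\,e::\rho,\mu,\mathsf{return}\,e\Rightarrow\mu,\mathsf{val}\,v$ if $\rho,e\Rightarrow v$; $\mathsf{app}(e_1,e_2,f.x.T)::\rho,\mu,e_1\,e_2\Rightarrow\mu',R$ if $\rho,e_1\Rightarrow v_1=\langle\rho',\mathsf{fun}\,f(x).M\rangle$, $\rho,e_2\Rightarrow v_2$, $T::\rho'[f\mapsto v_1][x\mapsto v_2],\mu,M\Rightarrow\mu',R$;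 $\mathsf{raise}\,e::\rho,\mu,\mathsf{raise}\,e\Rightarrow\mu,\mathsf{exn}\,v$ if $\rho,e\Rightarrow v$; $\mathsf{ref}_\ell\,e::\rho,\mu,\mathsf{ref}\,e\Rightarrow\mu[\ell\mapsto v],\mathsf{val}\,\ell$ if $\rho,e\Rightarrow v$, $\ell\notin\mathrm{dom}\,\mu$; $e_1:=_\ell e_2::\rho,\mu,e_1:=e_2\Rightarrow\mu[\ell\mapsto v],\mathsf{val}\,()$ if $\rho,e_1\Rightarrow\ell$, $\rho,e_2\Rightarrow v$; $!_\ell e::\rho,\mu,!e\Rightarrow\mu,\mathsf{val}\,\mu(\ell)$ if $\rho,e\Rightarrow\ell\in\mathrm{dom}\,\mu$; $\mathsf{let_S}(T_1,x.T_2)::\rho,\mu,\mathsf{let}\,x=M_1\,\mathsf{in}\,M_2\Rightarrow\mu'',R$ if $T_1::\rho,\mu,M_1\Rightarrow\mu',\mathsf{val}\,v$ and $T_2::\rho[x\mapsto v],\mu',M_2\Rightarrow\mu'',R$; $\mathsf{let_F}(T)::\ldots\Rightarrow\mu',\mathsf{exn}\,v$ if $T::\rho,\mu,M_1\Rightarrow\mu',\mathsf{exn}\,v$; $\mathsf{try_F}(T_1,x.T_2)::\rho,\mu,\mathsf{try}\,M_1\,\mathsf{with}\,x\to M_2\Rightarrow\mu'',R$ if $T_1::\rho,\mu,M_1\Rightarrow\mu',\mathsf{exn}\,v$, $T_2::\rho[x\mapsto v],\mu',M_2\Rightarrow\mu'',R$; $\mathsf{try_S}(T_1)::\ldots\Rightarrow\mu',\mathsf{val}\,v$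 if $T_1::\rho,\mu,M_1\Rightarrow\mu',\mathsf{val}\,v$; $\mathsf{caseL}(e,x.T,y)::\rho,\mu,\mathsf{case}\,e\,\mathsf{of}\{\mathsf{inl}\,x\to M_1;\mathsf{inr}\,y\to M_2\}\Rightarrow\mu',R$ if $\rho,e\Rightarrow\mathsf{inl}\,v$, $T::\rho[x\mapsto v],\mu,M_1\Rightarrow\mu',R$; symmetrically $\mathsf{caseR}(e,x,y.T)$. Expression backward slicing $v,e\searrow\rho,e'$ (first rule used whenever it applies): $\Box,e\searrow\Box,\Box$; for $v\neq\Box$, $v,x\searrow\Box[x\mapsto v],x$; $\langle\rho,\mathsf{fun}\,f(x).M\rangle,\mathsf{fun}\,f(x).M'\searrow\rho,\mathsf{fun}\,f(x).M$; $(),()\searrow\Box,()$; $\mathsf{inl}\,v,\mathsf{inl}\,e\searrow\rho,\mathsf{inl}\,e'$ and $\mathsf{inr}\,v,\mathsf{inr}\,e\searrow\rho,\mathsf{inr}\,e'$ if $v,e\searrow\rho,e'$; $(v_1,v_2),(e_1,e_2)\searrow\rho_1\sqcup\rho_2,(e_1',e_2')$ if $v_i,e_i\searrow\rho_i,e_i'$; $v,\mathsf{fst}\,e\searrow\rho,\mathsf{fst}\,e'$ if $(v,\Box),e\searrow\rho,e'$; $v,\mathsf{snd}\,e\searrow\rho,\mathsf{snd}\,e'$ if $(\Box,v),e\searrow\rho,e'$. Computation backward slicing $\mu,R,T\searrow\rho,\mu',M,U$ (B-Slice$\Box$ is applied whenever it applies): (B-Slice$\Box$) if $\mu\triangleleft\mathsf{writes}(T)=\mu$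 then $\mu,k\,\Box,T\searrow\Box,\mu,\Box,\Box^k_{\mathsf{writes}(T)}$. (B-Ret) $v,e\searrow\rho,e'$ ⟹ $\mu,\mathsf{val}\,v,\mathsf{return}\,e\searrow\rho,\mu,\mathsf{return}\,e',\mathsf{return}\,e'$. (B-Let) $\mu,R,T_2\searrow\rho_2[x\mapsto v],\mu',M_2,U_2$, $\mu',\mathsf{val}\,v,T_1\searrow\rho_1,\mu'',M_1,U_1$ ⟹ $\mu,R,\mathsf{let_S}(T_1,x.T_2)\searrow\rho_1\sqcup\rho_2,\mu'',\mathsf{let}\,x=M_1\,\mathsf{in}\,M_2,\mathsf{let_S}(U_1,x.U_2)$. (B-LetFail) $\mu,\mathsf{exn}\,v,T_1\searrow\rho,\mu',M_1,U_1$ ⟹ $\mu,\mathsf{exn}\,v,\mathsf{let_F}(T_1)\searrow\rho,\mu',\mathsf{let}\,x=M_1\,\mathsf{in}\,\Box,\mathsf{let_F}(U_1)$. (B-CaseL) $\mu,R,T\searrow\rho[x\mapsto v],\mu',M_1,U$, $\mathsf{inl}\,v,e\searrow\rho',e'$ ⟹ $\mu,R,\mathsf{caseL}(e,x.T,y)\searrow\rho\sqcup\rho',\mu',\mathsf{case}\,e'\,\mathsf{of}\{\mathsf{inl}\,x\to M_1;\mathsf{inr}\,y\to\Box\},\mathsf{caseL}(e',x.U,y)$. (B-CaseR) $\mu,R,T\searrow\rho[y\mapsto v],\mu',M_2,U$, $\mathsf{inr}\,v,e\searrow\rho',e'$ ⟹ $\mu,R,\mathsf{caseR}(e,x,y.T)\searrow\rho\sqcup\rho',\mu',\mathsf{case}\,e'\,\mathsf{of}\{\mathsf{inl}\,x\to\Box;\mathsf{inr}\,y\to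 M_2\},\mathsf{caseR}(e',x,y.U)$. (B-App) $\mu,R,T\searrow\rho[f\mapsto v_1][x\mapsto v_2],\mu',M,U$, $v_2,e_2\searrow\rho_2,e_2'$, $v_1\sqcup\langle\rho,\mathsf{fun}\,f(x).M\rangle,e_1\searrow\rho_1,e_1'$ ⟹ $\mu,R,\mathsf{app}(e_1,e_2,f.x.T)\searrow\rho_1\sqcup\rho_2,\mu',e_1'\,e_2',\mathsf{app}(e_1',e_2',f.x.U)$. (B-Raise) $v,e\searrow\rho,e'$ ⟹ $\mu,\mathsf{exn}\,v,\mathsf{raise}\,e\searrow\rho,\mu,\mathsf{raise}\,e',\mathsf{raise}\,e'$. (B-TryFail) $\mu,R,T_2\searrow\rho_1[x\mapsto v],\mu',M_2,U_2$, $\mu',\mathsf{exn}\,v,T_1\searrow\rho_2,\mu'',M_1,U_1$ ⟹ $\mu,R,\mathsf{try_F}(T_1,x.T_2)\searrow\rho_1\sqcup\rho_2,\mu'',\mathsf{try}\,M_1\,\mathsf{with}\,x\to M_2,\mathsf{try_F}(U_1,x.U_2)$. (B-Try) $\mu,\mathsf{val}\,v,T_1\searrow\rho,\mu',M_1,U_1$ ⟹ $\mu,\mathsf{val}\,v,\mathsf{try_S}(T_1)\searrow\rho,\mu',\mathsf{try}\,M_1\,\mathsf{with}\,x\to\Box,\mathsf{try_S}(U_1)$. (B-Ref) $\mu(\ell),e\searrow\rho,e'$ ⟹ $\mu,\mathsf{val}\,v,\mathsf{ref}_\ell\,e\searrow\rho,\mu[\ell\mapsto\Box],\mathsf{ref}\,e',\mathsf{ref}_\ell\,e'$.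 (B-Assign) $\mu(\ell),e_2\searrow\rho_2,e_2'$, $\ell,e_1\searrow\rho_1,e_1'$ ⟹ $\mu,\mathsf{val}\,v,e_1:=_\ell e_2\searrow\rho_1\sqcup\rho_2,\mu[\ell\mapsto\Box],e_1':=e_2',e_1':=_\ell e_2'$. (B-Deref) $\ell,e\searrow\rho,e'$ ⟹ $\mu,\mathsf{val}\,v,!_\ell e\searrow\rho,\mu\sqcup[\ell\mapsto v],!e',!_\ell e'$. For $T::\sigma,\nu,M\Rightarrow\nu',S$, backward slicing along $T$ is a total deterministic function from $\mathrm{Prefix}(\nu',S)$ into $\mathrm{Prefix}(\sigma,\nu,M,T)$, so $\mathsf{bwd}_T$ is well defined. *)

theory Defs
  imports Main
begin

section \<open>iTML syntax with holes\<close>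

type_synonym var = string
type_synonym loc = nat

datatype exp =
    EVar var | EUnit | EInl exp | EInr exp | EPair exp exp | EFst exp | ESnd exp
  | EFun var var comp   (* fun f(x). M *)
  | EHole
and comp =
    Return exp
  | Let var comp comp
  | App exp exp
  | Case exp var comp var comp   (* case e of {inl x -> M1; inr y -> M2} *)
  | Raise exp
  | Try comp var comp            (* try M1 with x -> M2 *)
  | Ref exp
  | Assign exp exp
  | Deref exp
  | CHole

datatype val =
    VUnit | VInl val | VInr val | VPair val val
  | VClo "var \<Rightarrow> val" var var comp   (* <rho, fun f(x). M> *)
  | VLoc loc
  | VHole

type_synonym env = "var \<Rightarrow> val"
type_synonym store = "loc \<Rightarrow> val"

datatype outc = OVal | OExn

datatype result = Res outc val

fun res_val :: "result \<Rightarrow> val" where "res_val (Res k v) = v"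

datatype trace =
    TReturn exp
  | TLetF trace
  | TLetS trace var trace                 (* let_S(T1, x.T2) *)
  | TApp exp exp var var trace            (* app(e1, e2, f.x.T) *)
  | TCaseL exp var trace var              (* caseL(e, x.T, y) *)
  | TCaseR exp var var trace              (* caseR(e, x, y.T) *)
  | TRaise exp
  | TTryS trace
  | TTryF trace var trace                 (* try_F(T1, x.T2) *)
  | TRef loc exp
  | TAssign exp loc exp
  | TDeref loc exp
  | THole outc "loc set"

definition hole_env :: env where "hole_env = (\<lambda>_. VHole)"
definition hole_store :: store where "hole_store = (\<lambda>_. VHole)"

definition sdom :: "store \<Rightarrow> loc set" where "sdom \<mu> = {l. \<mu> l \<noteq> VHole}"

primrec writes :: "trace \<Rightarrow> loc set" where
  "writes (TReturn e) = {}"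
| "writes (TLetF T) = writes T"
| "writes (TLetS T1 x T2) = writes T1 \<union> writes T2"
| "writes (TApp e1 e2 f x T) = writes T"
| "writes (TCaseL e x T y) = writes T"
| "writes (TCaseR e x y T) = writes T"
| "writes (TRaise e) = {}"
| "writes (TTryS T) = writes T"
| "writes (TTryF T1 x T2) = writes T1 \<union> writes T2"
| "writes (TRef l e) = {l}"
| "writes (TAssign e1 l e2) = {l}"
| "writes (TDeref l e) = {}"
| "writes (THole k L) = L"

primrec outcome :: "trace \<Rightarrow> outc" where
  "outcome (TReturn e) = OVal"
| "outcome (TLetF T) = OExn"
| "outcome (TLetS T1 x T2) = outcome T2"
| "outcome (TApp e1 e2 f x T) = outcome T"
| "outcome (TCaseL e x T y) = outcome T"
| "outcome (TCaseR e x y T) = outcome T"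
| "outcome (TRaise e) = OExn"
| "outcome (TTryS T) = OVal"
| "outcome (TTryF T1 x T2) = outcome T2"
| "outcome (TRef l e) = OVal"
| "outcome (TAssign e1 l e2) = OVal"
| "outcome (TDeref l e) = OVal"
| "outcome (THole k L) = k"

section \<open>Prefix order\<close>

inductive le_exp :: "exp \<Rightarrow> exp \<Rightarrow> bool"
  and le_comp :: "comp \<Rightarrow> comp \<Rightarrow> bool" where
  "le_exp EHole e"
| "le_exp (EVar x) (EVar x)"
| "le_exp EUnit EUnit"
| "le_exp a b \<Longrightarrow> le_exp (EInl a) (EInl b)"
| "le_exp a b \<Longrightarrow> le_exp (EInr a) (EInr b)"
| "le_exp a1 b1 \<Longrightarrow> le_exp a2 b2 \<Longrightarrow> le_exp (EPair a1 a2) (EPair b1 b2)"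
| "le_exp a b \<Longrightarrow> le_exp (EFst a) (EFst b)"
| "le_exp a b \<Longrightarrow> le_exp (ESnd a) (ESnd b)"
| "le_comp M M' \<Longrightarrow> le_exp (EFun f x M) (EFun f x M')"
| "le_comp CHole M"
| "le_exp a b \<Longrightarrow> le_comp (Return a) (Return b)"
| "le_comp M1 N1 \<Longrightarrow> le_comp M2 N2 \<Longrightarrow> le_comp (Let x M1 M2) (Let x N1 N2)"
| "le_exp a1 b1 \<Longrightarrow> le_exp a2 b2 \<Longrightarrow> le_comp (App a1 a2) (App b1 b2)"
| "le_exp a b \<Longrightarrow> le_comp M1 N1 \<Longrightarrow> le_comp M2 N2 \<Longrightarrow>
     le_comp (Case a x M1 y M2) (Case b x N1 y N2)"
| "le_exp a b \<Longrightarrow> le_comp (Raise a) (Raise b)"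
| "le_comp M1 N1 \<Longrightarrow> le_comp M2 N2 \<Longrightarrow> le_comp (Try M1 x M2) (Try N1 x N2)"
| "le_exp a b \<Longrightarrow> le_comp (Ref a) (Ref b)"
| "le_exp a1 b1 \<Longrightarrow> le_exp a2 b2 \<Longrightarrow> le_comp (Assign a1 a2) (Assign b1 b2)"
| "le_exp a b \<Longrightarrow> le_comp (Deref a) (Deref b)"

inductive le_val :: "val \<Rightarrow> val \<Rightarrow> bool" where
  "le_val VHole v"
| "le_val VUnit VUnit"
| "le_val a b \<Longrightarrow> le_val (VInl a) (VInl b)"
| "le_val a b \<Longrightarrow> le_val (VInr a) (VInr b)"
| "le_val a1 b1 \<Longrightarrow> le_val a2 b2 \<Longrightarrow> le_val (VPair a1 a2) (VPair b1 b2)"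
| "(\<forall>z. le_val (\<rho> z) (\<rho>' z)) \<Longrightarrow> le_comp M M' \<Longrightarrow> le_val (VClo \<rho> f x M) (VClo \<rho>' f x M')"
| "le_val (VLoc l) (VLoc l)"

definition le_env :: "env \<Rightarrow> env \<Rightarrow> bool" where
  "le_env \<rho> \<rho>' \<longleftrightarrow> (\<forall>z. le_val (\<rho> z) (\<rho>' z))"

definition le_store :: "store \<Rightarrow> store \<Rightarrow> bool" where
  "le_store \<mu> \<mu>' \<longleftrightarrow> (\<forall>l. le_val (\<mu> l) (\<mu>' l))"

fun le_res :: "result \<Rightarrow> result \<Rightarrow> bool" where
  "le_res (Res k v) (Res k' v') \<longleftrightarrow> k = k' \<and> le_val v v'"

inductive le_trace :: "trace \<Rightarrow> trace \<Rightarrow> bool" where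
  "writes T = L \<Longrightarrow> outcome T = k \<Longrightarrow> le_trace (THole k L) T"
| "le_exp a b \<Longrightarrow> le_trace (TReturn a) (TReturn b)"
| "le_trace T T' \<Longrightarrow> le_trace (TLetF T) (TLetF T')"
| "le_trace T1 T1' \<Longrightarrow> le_trace T2 T2' \<Longrightarrow> le_trace (TLetS T1 x T2) (TLetS T1' x T2')"
| "le_exp a1 b1 \<Longrightarrow> le_exp a2 b2 \<Longrightarrow> le_trace T T' \<Longrightarrow>
     le_trace (TApp a1 a2 f x T) (TApp b1 b2 f x T')"
| "le_exp a b \<Longrightarrow> le_trace T T' \<Longrightarrow> le_trace (TCaseL a x T y) (TCaseL b x T' y)"
| "le_exp a b \<Longrightarrow> le_trace T T' \<Longrightarrow> le_trace (TCaseR a x y T) (TCaseR b x y T')"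
| "le_exp a b \<Longrightarrow> le_trace (TRaise a) (TRaise b)"
| "le_trace T T' \<Longrightarrow> le_trace (TTryS T) (TTryS T')"
| "le_trace T1 T1' \<Longrightarrow> le_trace T2 T2' \<Longrightarrow> le_trace (TTryF T1 x T2) (TTryF T1' x T2')"
| "le_exp a b \<Longrightarrow> le_trace (TRef l a) (TRef l b)"
| "le_exp a1 b1 \<Longrightarrow> le_exp a2 b2 \<Longrightarrow> le_trace (TAssign a1 l a2) (TAssign b1 l b2)"
| "le_exp a b \<Longrightarrow> le_trace (TDeref l a) (TDeref l b)"

definition le_sr :: "store \<times> result \<Rightarrow> store \<times> result \<Rightarrow> bool" where
  "le_sr p q \<longleftrightarrow> le_store (fst p) (fst q) \<and> le_res (snd p) (snd q)"

definition le_cfg :: "env \<times> store \<times> comp \<times> trace \<Rightarrow> env \<times> store \<times> comp \<times> trace \<Rightarrow> bool" where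
  "le_cfg p q \<longleftrightarrow> (case p of (\<rho>, \<mu>, M, T) \<Rightarrow> case q of (\<rho>', \<mu>', M', T') \<Rightarrow>
     le_env \<rho> \<rho>' \<and> le_store \<mu> \<mu>' \<and> le_comp M M' \<and> le_trace T T')"

definition Prefix_sr :: "store \<times> result \<Rightarrow> (store \<times> result) set" where
  "Prefix_sr t = {t'. le_sr t' t}"

definition Prefix_cfg :: "env \<times> store \<times> comp \<times> trace \<Rightarrow> (env \<times> store \<times> comp \<times> trace) set" where
  "Prefix_cfg t = {t'. le_cfg t' t}"

section \<open>Joins (structural; they compute the lattice join on any Prefix(t))\<close>

primrec join_exp :: "exp \<Rightarrow> exp \<Rightarrow> exp"
  and join_comp :: "comp \<Rightarrow> comp \<Rightarrow> comp" where
  "join_exp (EVar x) w = EVar x"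
| "join_exp EUnit w = EUnit"
| "join_exp (EInl a) w = (case w of EInl b \<Rightarrow> EInl (join_exp a b) | _ \<Rightarrow> EInl a)"
| "join_exp (EInr a) w = (case w of EInr b \<Rightarrow> EInr (join_exp a b) | _ \<Rightarrow> EInr a)"
| "join_exp (EPair a1 a2) w = (case w of EPair b1 b2 \<Rightarrow> EPair (join_exp a1 b1) (join_exp a2 b2)
                                   | _ \<Rightarrow> EPair a1 a2)"
| "join_exp (EFst a) w = (case w of EFst b \<Rightarrow> EFst (join_exp a b) | _ \<Rightarrow> EFst a)"
| "join_exp (ESnd a) w = (case w of ESnd b \<Rightarrow> ESnd (join_exp a b) | _ \<Rightarrow> ESnd a)"
| "join_exp (EFun f x M) w = (case w of EFun _ _ N \<Rightarrow> EFun f x (join_comp M N) | _ \<Rightarrow> EFun f x M)"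
| "join_exp EHole w = w"
| "join_comp (Return a) w = (case w of Return b \<Rightarrow> Return (join_exp a b) | _ \<Rightarrow> Return a)"
| "join_comp (Let x M1 M2) w = (case w of Let _ N1 N2 \<Rightarrow> Let x (join_comp M1 N1) (join_comp M2 N2)
                                   | _ \<Rightarrow> Let x M1 M2)"
| "join_comp (App a1 a2) w = (case w of App b1 b2 \<Rightarrow> App (join_exp a1 b1) (join_exp a2 b2)
                                 | _ \<Rightarrow> App a1 a2)"
| "join_comp (Case a x M1 y M2) w = (case w of Case b _ N1 _ N2 \<Rightarrow>
       Case (join_exp a b) x (join_comp M1 N1) y (join_comp M2 N2) | _ \<Rightarrow> Case a x M1 y M2)"
| "join_comp (Raise a) w = (case w of Raise b \<Rightarrow> Raise (join_exp a b) | _ \<Rightarrow> Raise a)"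
| "join_comp (Try M1 x M2) w = (case w of Try N1 _ N2 \<Rightarrow> Try (join_comp M1 N1) x (join_comp M2 N2)
                                   | _ \<Rightarrow> Try M1 x M2)"
| "join_comp (Ref a) w = (case w of Ref b \<Rightarrow> Ref (join_exp a b) | _ \<Rightarrow> Ref a)"
| "join_comp (Assign a1 a2) w = (case w of Assign b1 b2 \<Rightarrow> Assign (join_exp a1 b1) (join_exp a2 b2)
                                    | _ \<Rightarrow> Assign a1 a2)"
| "join_comp (Deref a) w = (case w of Deref b \<Rightarrow> Deref (join_exp a b) | _ \<Rightarrow> Deref a)"
| "join_comp CHole w = w"

primrec join_val :: "val \<Rightarrow> val \<Rightarrow> val" where
  "join_val VUnit w = VUnit"
| "join_val (VInl a) w = (case w of VInl b \<Rightarrow> VInl (join_val a b) | _ \<Rightarrow> VInl a)"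
| "join_val (VInr a) w = (case w of VInr b \<Rightarrow> VInr (join_val a b) | _ \<Rightarrow> VInr a)"
| "join_val (VPair a1 a2) w = (case w of VPair b1 b2 \<Rightarrow> VPair (join_val a1 b1) (join_val a2 b2)
                                   | _ \<Rightarrow> VPair a1 a2)"
| "join_val (VClo \<rho> f x M) w = (case w of VClo \<rho>' _ _ N \<Rightarrow>
       VClo (\<lambda>z. join_val (\<rho> z) (\<rho>' z)) f x (join_comp M N) | _ \<Rightarrow> VClo \<rho> f x M)"
| "join_val (VLoc l) w = VLoc l"
| "join_val VHole w = w"

definition join_env :: "env \<Rightarrow> env \<Rightarrow> env" where
  "join_env \<rho> \<rho>' = (\<lambda>z. join_val (\<rho> z) (\<rho>' z))"

definition join_store :: "store \<Rightarrow> store \<Rightarrow> store" where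
  "join_store \<mu> \<mu>' = (\<lambda>l. join_val (\<mu> l) (\<mu>' l))"

fun join_res :: "result \<Rightarrow> result \<Rightarrow> result" where
  "join_res (Res k v) (Res k' v') = Res k (join_val v v')"

primrec join_trace :: "trace \<Rightarrow> trace \<Rightarrow> trace" where
  "join_trace (TReturn a) U = (case U of TReturn b \<Rightarrow> TReturn (join_exp a b) | _ \<Rightarrow> TReturn a)"
| "join_trace (TLetF T) U = (case U of TLetF T' \<Rightarrow> TLetF (join_trace T T') | _ \<Rightarrow> TLetF T)"
| "join_trace (TLetS T1 x T2) U = (case U of TLetS T1' _ T2' \<Rightarrow>
       TLetS (join_trace T1 T1') x (join_trace T2 T2') | _ \<Rightarrow> TLetS T1 x T2)"
| "join_trace (TApp a1 a2 f x T) U = (case U of TApp b1 b2 _ _ T' \<Rightarrow>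
       TApp (join_exp a1 b1) (join_exp a2 b2) f x (join_trace T T') | _ \<Rightarrow> TApp a1 a2 f x T)"
| "join_trace (TCaseL a x T y) U = (case U of TCaseL b _ T' _ \<Rightarrow>
       TCaseL (join_exp a b) x (join_trace T T') y | _ \<Rightarrow> TCaseL a x T y)"
| "join_trace (TCaseR a x y T) U = (case U of TCaseR b _ _ T' \<Rightarrow>
       TCaseR (join_exp a b) x y (join_trace T T') | _ \<Rightarrow> TCaseR a x y T)"
| "join_trace (TRaise a) U = (case U of TRaise b \<Rightarrow> TRaise (join_exp a b) | _ \<Rightarrow> TRaise a)"
| "join_trace (TTryS T) U = (case U of TTryS T' \<Rightarrow> TTryS (join_trace T T') | _ \<Rightarrow> TTryS T)"
| "join_trace (TTryF T1 x T2) U = (case U of TTryF T1' _ T2' \<Rightarrow>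
       TTryF (join_trace T1 T1') x (join_trace T2 T2') | _ \<Rightarrow> TTryF T1 x T2)"
| "join_trace (TRef l a) U = (case U of TRef _ b \<Rightarrow> TRef l (join_exp a b) | _ \<Rightarrow> TRef l a)"
| "join_trace (TAssign a1 l a2) U = (case U of TAssign b1 _ b2 \<Rightarrow>
       TAssign (join_exp a1 b1) l (join_exp a2 b2) | _ \<Rightarrow> TAssign a1 l a2)"
| "join_trace (TDeref l a) U = (case U of TDeref _ b \<Rightarrow> TDeref l (join_exp a b) | _ \<Rightarrow> TDeref l a)"
| "join_trace (THole k L) U = U"

definition join_sr :: "store \<times> result \<Rightarrow> store \<times> result \<Rightarrow> store \<times> result" where
  "join_sr p q = (join_store (fst p) (fst q), join_res (snd p) (snd q))"

definition join_cfg :: "env \<times> store \<times> comp \<times> trace \<Rightarrow> env \<times> store \<times> comp \<times> trace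
                        \<Rightarrow> env \<times> store \<times> comp \<times> trace" where
  "join_cfg p q = (case p of (\<rho>, \<mu>, M, T) \<Rightarrow> case q of (\<rho>', \<mu>', M', T') \<Rightarrow>
     (join_env \<rho> \<rho>', join_store \<mu> \<mu>', join_comp M M', join_trace T T'))"

section \<open>Evaluation (hole-free)\<close>

inductive eval_exp :: "env \<Rightarrow> exp \<Rightarrow> val \<Rightarrow> bool" where
  "eval_exp \<rho> (EVar x) (\<rho> x)"
| "eval_exp \<rho> EUnit VUnit"
| "eval_exp \<rho> (EFun f x M) (VClo \<rho> f x M)"
| "eval_exp \<rho> e v \<Longrightarrow> eval_exp \<rho> (EInl e) (VInl v)"
| "eval_exp \<rho> e v \<Longrightarrow> eval_exp \<rho> (EInr e) (VInr v)"
| "eval_exp \<rho> e1 v1 \<Longrightarrow> eval_exp \<rho> e2 v2 \<Longrightarrow> eval_exp \<rho> (EPair e1 e2) (VPair v1 v2)"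
| "eval_exp \<rho> e (VPair v1 v2) \<Longrightarrow> eval_exp \<rho> (EFst e) v1"
| "eval_exp \<rho> e (VPair v1 v2) \<Longrightarrow> eval_exp \<rho> (ESnd e) v2"

text \<open>\<open>eval T \<rho> \<mu> M \<mu>' R\<close> means \<open>T :: \<rho>, \<mu>, M \<Rightarrow> \<mu>', R\<close>.\<close>

inductive eval :: "trace \<Rightarrow> env \<Rightarrow> store \<Rightarrow> comp \<Rightarrow> store \<Rightarrow> result \<Rightarrow> bool" where
  ret: "eval_exp \<rho> e v \<Longrightarrow> eval (TReturn e) \<rho> \<mu> (Return e) \<mu> (Res OVal v)"
| app: "eval_exp \<rho> e1 v1 \<Longrightarrow> v1 = VClo \<rho>' f x M \<Longrightarrow> eval_exp \<rho> e2 v2 \<Longrightarrow>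
     eval T ((\<rho>'(f := v1))(x := v2)) \<mu> M \<mu>' R \<Longrightarrow>
     eval (TApp e1 e2 f x T) \<rho> \<mu> (App e1 e2) \<mu>' R"
| raise: "eval_exp \<rho> e v \<Longrightarrow> eval (TRaise e) \<rho> \<mu> (Raise e) \<mu> (Res OExn v)"
| ref: "eval_exp \<rho> e v \<Longrightarrow> l \<notin> sdom \<mu> \<Longrightarrow>
     eval (TRef l e) \<rho> \<mu> (Ref e) (\<mu>(l := v)) (Res OVal (VLoc l))"
| assign: "eval_exp \<rho> e1 (VLoc l) \<Longrightarrow> eval_exp \<rho> e2 v \<Longrightarrow>
     eval (TAssign e1 l e2) \<rho> \<mu> (Assign e1 e2) (\<mu>(l := v)) (Res OVal VUnit)"
| deref: "eval_exp \<rho> e (VLoc l) \<Longrightarrow> l \<in> sdom \<mu> \<Longrightarrow>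
     eval (TDeref l e) \<rho> \<mu> (Deref e) \<mu> (Res OVal (\<mu> l))"
| letS: "eval T1 \<rho> \<mu> M1 \<mu>' (Res OVal v) \<Longrightarrow> eval T2 (\<rho>(x := v)) \<mu>' M2 \<mu>'' R \<Longrightarrow>
     eval (TLetS T1 x T2) \<rho> \<mu> (Let x M1 M2) \<mu>'' R"
| letF: "eval T \<rho> \<mu> M1 \<mu>' (Res OExn v) \<Longrightarrow>
     eval (TLetF T) \<rho> \<mu> (Let x M1 M2) \<mu>' (Res OExn v)"
| tryF: "eval T1 \<rho> \<mu> M1 \<mu>' (Res OExn v) \<Longrightarrow> eval T2 (\<rho>(x := v)) \<mu>' M2 \<mu>'' R \<Longrightarrow>
     eval (TTryF T1 x T2) \<rho> \<mu> (Try M1 x M2) \<mu>'' R"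
| tryS: "eval T1 \<rho> \<mu> M1 \<mu>' (Res OVal v) \<Longrightarrow>
     eval (TTryS T1) \<rho> \<mu> (Try M1 x M2) \<mu>' (Res OVal v)"
| caseL: "eval_exp \<rho> e (VInl v) \<Longrightarrow> eval T (\<rho>(x := v)) \<mu> M1 \<mu>' R \<Longrightarrow>
     eval (TCaseL e x T y) \<rho> \<mu> (Case e x M1 y M2) \<mu>' R"
| caseR: "eval_exp \<rho> e (VInr v) \<Longrightarrow> eval T (\<rho>(y := v)) \<mu> M2 \<mu>' R \<Longrightarrow>
     eval (TCaseR e x y T) \<rho> \<mu> (Case e x M1 y M2) \<mu>' R"

section \<open>Backward slicing\<close>

definition erase :: "store \<Rightarrow> loc set \<Rightarrow> store" where
  "erase \<mu> L = (\<lambda>l. if l \<in> L then VHole else \<mu> l)"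

text \<open>Expression slicing \<open>v, e \<searrow> \<rho>, e'\<close>; the hole rule has priority.\<close>

inductive eslice :: "val \<Rightarrow> exp \<Rightarrow> env \<Rightarrow> exp \<Rightarrow> bool" where
  "eslice VHole e hole_env EHole"
| "v \<noteq> VHole \<Longrightarrow> eslice v (EVar x) (hole_env(x := v)) (EVar x)"
| "eslice (VClo \<rho> f x M) (EFun f x M') \<rho> (EFun f x M)"
| "eslice VUnit EUnit hole_env EUnit"
| "eslice v e \<rho> e' \<Longrightarrow> eslice (VInl v) (EInl e) \<rho> (EInl e')"
| "eslice v e \<rho> e' \<Longrightarrow> eslice (VInr v) (EInr e) \<rho> (EInr e')"
| "eslice v1 e1 \<rho>1 e1' \<Longrightarrow> eslice v2 e2 \<rho>2 e2' \<Longrightarrow>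
     eslice (VPair v1 v2) (EPair e1 e2) (join_env \<rho>1 \<rho>2) (EPair e1' e2')"
| "v \<noteq> VHole \<Longrightarrow> eslice (VPair v VHole) e \<rho> e' \<Longrightarrow> eslice v (EFst e) \<rho> (EFst e')"
| "v \<noteq> VHole \<Longrightarrow> eslice (VPair VHole v) e \<rho> e' \<Longrightarrow> eslice v (ESnd e) \<rho> (ESnd e')"

text \<open>Side condition of B-Slice-Box; all other rules apply only when it does not.\<close>

definition box_applies :: "store \<Rightarrow> result \<Rightarrow> trace \<Rightarrow> bool" where
  "box_applies \<mu> R T \<longleftrightarrow> res_val R = VHole \<and> erase \<mu> (writes T) = \<mu>"

text \<open>\<open>bslice \<mu> R T \<rho> \<mu>' M U\<close> means \<open>\<mu>, R, T \<searrow> \<rho>, \<mu>', M, U\<close>.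
  An output environment written \<open>\<rho>[x \<mapsto> v]\<close> in the paper is decomposed as
  \<open>\<rho> = \<rho>0(x := \<box>)\<close>, \<open>v = \<rho>0 x\<close>.\<close>

inductive bslice :: "store \<Rightarrow> result \<Rightarrow> trace \<Rightarrow> env \<Rightarrow> store \<Rightarrow> comp \<Rightarrow> trace \<Rightarrow> bool" where
  slice_box: "erase \<mu> (writes T) = \<mu> \<Longrightarrow>
     bslice \<mu> (Res k VHole) T hole_env \<mu> CHole (THole k (writes T))"
| ret: "\<not> box_applies \<mu> (Res OVal v) (TReturn e) \<Longrightarrow> eslice v e \<rho> e' \<Longrightarrow>
     bslice \<mu> (Res OVal v) (TReturn e) \<rho> \<mu> (Return e') (TReturn e')"
| lett: "\<not> box_applies \<mu> R (TLetS T1 x T2) \<Longrightarrow>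
     bslice \<mu> R T2 \<rho>0 \<mu>' M2 U2 \<Longrightarrow>
     bslice \<mu>' (Res OVal (\<rho>0 x)) T1 \<rho>1 \<mu>'' M1 U1 \<Longrightarrow>
     bslice \<mu> R (TLetS T1 x T2) (join_env \<rho>1 (\<rho>0(x := VHole))) \<mu>'' (Let x M1 M2) (TLetS U1 x U2)"
| letfail: "\<not> box_applies \<mu> (Res OExn v) (TLetF T1) \<Longrightarrow>
     bslice \<mu> (Res OExn v) T1 \<rho> \<mu>' M1 U1 \<Longrightarrow>
     bslice \<mu> (Res OExn v) (TLetF T1) \<rho> \<mu>' (Let x M1 CHole) (TLetF U1)"
| caseL: "\<not> box_applies \<mu> R (TCaseL e x T y) \<Longrightarrow>
     bslice \<mu> R T \<rho>0 \<mu>' M1 U \<Longrightarrow> eslice (VInl (\<rho>0 x)) e \<rho>' e' \<Longrightarrow>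
     bslice \<mu> R (TCaseL e x T y) (join_env (\<rho>0(x := VHole)) \<rho>') \<mu>'
       (Case e' x M1 y CHole) (TCaseL e' x U y)"
| caseR: "\<not> box_applies \<mu> R (TCaseR e x y T) \<Longrightarrow>
     bslice \<mu> R T \<rho>0 \<mu>' M2 U \<Longrightarrow> eslice (VInr (\<rho>0 y)) e \<rho>' e' \<Longrightarrow>
     bslice \<mu> R (TCaseR e x y T) (join_env (\<rho>0(y := VHole)) \<rho>') \<mu>'
       (Case e' x CHole y M2) (TCaseR e' x y U)"
| app: "\<not> box_applies \<mu> R (TApp e1 e2 f x T) \<Longrightarrow>
     bslice \<mu> R T \<rho>0 \<mu>' M U \<Longrightarrow>
     eslice (\<rho>0 x) e2 \<rho>2 e2' \<Longrightarrow>
     eslice (join_val ((\<rho>0(x := VHole)) f) (VClo ((\<rho>0(x := VHole))(f := VHole)) f x M)) e1 \<rho>1 e1' \<Longrightarrow>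
     bslice \<mu> R (TApp e1 e2 f x T) (join_env \<rho>1 \<rho>2) \<mu>' (App e1' e2') (TApp e1' e2' f x U)"
| raise: "\<not> box_applies \<mu> (Res OExn v) (TRaise e) \<Longrightarrow> eslice v e \<rho> e' \<Longrightarrow>
     bslice \<mu> (Res OExn v) (TRaise e) \<rho> \<mu> (Raise e') (TRaise e')"
| tryfail: "\<not> box_applies \<mu> R (TTryF T1 x T2) \<Longrightarrow>
     bslice \<mu> R T2 \<rho>0 \<mu>' M2 U2 \<Longrightarrow>
     bslice \<mu>' (Res OExn (\<rho>0 x)) T1 \<rho>2 \<mu>'' M1 U1 \<Longrightarrow>
     bslice \<mu> R (TTryF T1 x T2) (join_env (\<rho>0(x := VHole)) \<rho>2) \<mu>'' (Try M1 x M2) (TTryF U1 x U2)"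
| trysucc: "\<not> box_applies \<mu> (Res OVal v) (TTryS T1) \<Longrightarrow>
     bslice \<mu> (Res OVal v) T1 \<rho> \<mu>' M1 U1 \<Longrightarrow>
     bslice \<mu> (Res OVal v) (TTryS T1) \<rho> \<mu>' (Try M1 x CHole) (TTryS U1)"
| ref: "\<not> box_applies \<mu> (Res OVal v) (TRef l e) \<Longrightarrow> eslice (\<mu> l) e \<rho> e' \<Longrightarrow>
     bslice \<mu> (Res OVal v) (TRef l e) \<rho> (\<mu>(l := VHole)) (Ref e') (TRef l e')"
| assign: "\<not> box_applies \<mu> (Res OVal v) (TAssign e1 l e2) \<Longrightarrow>
     eslice (\<mu> l) e2 \<rho>2 e2' \<Longrightarrow> eslice (VLoc l) e1 \<rho>1 e1' \<Longrightarrow>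
     bslice \<mu> (Res OVal v) (TAssign e1 l e2) (join_env \<rho>1 \<rho>2) (\<mu>(l := VHole))
       (Assign e1' e2') (TAssign e1' l e2')"
| deref: "\<not> box_applies \<mu> (Res OVal v) (TDeref l e) \<Longrightarrow> eslice (VLoc l) e \<rho> e' \<Longrightarrow>
     bslice \<mu> (Res OVal v) (TDeref l e) \<rho> (join_store \<mu> (hole_store(l := v))) (Deref e') (TDeref l e')"

definition bwd :: "env \<Rightarrow> store \<Rightarrow> comp \<Rightarrow> trace \<Rightarrow> store \<times> result \<Rightarrow> env \<times> store \<times> comp \<times> trace" where
  "bwd \<sigma> \<nu> M T p = (THE q. q \<in> Prefix_cfg (\<sigma>, \<nu>, M, T) \<and>
     (case p of (\<mu>1, R1) \<Rightarrow> case q of (\<rho>, \<mu>0, N, U) \<Rightarrow> bslice \<mu>1 R1 T \<rho> \<mu>0 N U))"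

end

theory Submission
  imports Defs
begin

text \<open>Backward slicing along a fixed trace is a rule system, not a function: rules B-LetFail and
  B-Try leave the binder of the discarded branch free. Erasing those binder names makes slicing
  deterministic, and below the original configuration the erasure loses nothing, so a bounded slice
  is unique and \<open>bwd\<^sub>T\<close> is well defined.

  Preservation of joins is proved by induction on the evaluation, constructing slices of both
  inputs and of their join simultaneously. If neither input is sliced by B-Slice\<open>\<box>\<close>, all three
  are built by the same rule from subslices that join by induction; the environments the rules
  assemble from several pieces are rearranged by the interchange law
  \<open>(a \<squnion> b) \<squnion> (c \<squnion> d) = (a \<squnion> c) \<squnion> (b \<squnion> d)\<close>, valid because everything lies below the original
  configuration. If one input is sliced by B-Slice\<open>\<box>\<close>, its store is empty on every location
  written by \<open>T\<close>; such a store passes unchanged through the slice of the other input and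
  reappears joined into its sliced input store.\<close>

section \<open>The prefix order and its joins\<close>

inductive_simps le_exp_simps[simp]:
  "le_exp a (EVar x)" "le_exp a EUnit" "le_exp a (EInl b)" "le_exp a (EInr b)"
  "le_exp a (EPair b1 b2)" "le_exp a (EFst b)" "le_exp a (ESnd b)" "le_exp a (EFun f x M)"
  "le_exp a EHole"
inductive_simps le_comp_simps[simp]:
  "le_comp a (Return b)" "le_comp a (Let x M1 M2)" "le_comp a (App b1 b2)"
  "le_comp a (Case b x M1 y M2)" "le_comp a (Raise b)" "le_comp a (Try M1 x M2)" "le_comp a (Ref b)"
  "le_comp a (Assign b1 b2)" "le_comp a (Deref b)" "le_comp a CHole"
inductive_simps le_val_simps[simp]:
  "le_val a VUnit" "le_val a (VInl b)" "le_val a (VInr b)" "le_val a (VPair b1 b2)"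
  "le_val a (VClo r f x M)" "le_val a (VLoc l)" "le_val a VHole"
inductive_simps le_trace_simps[simp]:
  "le_trace a (TReturn b)" "le_trace a (TLetF T)" "le_trace a (TLetS T1 x T2)"
  "le_trace a (TApp b1 b2 f x T)" "le_trace a (TCaseL b x T y)" "le_trace a (TCaseR b x y T)"
  "le_trace a (TRaise b)" "le_trace a (TTryS T)" "le_trace a (TTryF T1 x T2)"
  "le_trace a (TRef l b)" "le_trace a (TAssign b1 l b2)" "le_trace a (TDeref l b)"
  "le_trace a (THole k L)"

lemma le_exp_hole [simp]: "le_exp EHole e"
  and le_comp_hole [simp]: "le_comp CHole M"
  by (rule le_exp_le_comp.intros)+

lemma le_val_hole [simp]: "le_val VHole v"
  by (rule le_val.intros)

lemma le_trace_hole_self [simp]: "le_trace (THole (outcome T) (writes T)) T"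
  by (rule le_trace.intros) auto

lemma le_res_Res_iff [simp]: "le_res R (Res k v) \<longleftrightarrow> (\<exists>u. R = Res k u \<and> le_val u v)"
  by (cases R) auto

lemma join_exp_hole_right [simp]: "join_exp a EHole = a"
  by (cases a) auto

lemma join_comp_hole_right [simp]: "join_comp M CHole = M"
  by (cases M) auto

lemma join_val_hole_right [simp]: "join_val a VHole = a"
  by (cases a) auto

lemma join_val_eq_hole_iff [simp]: "join_val a b = VHole \<longleftrightarrow> a = VHole \<and> b = VHole"
  by (cases a) (auto split: val.split)

text \<open>The structural joins are only meaningful on elements with a common upper bound, which is
  why the lattice laws below are all relative to one.\<close>

lemma join_exp_commute: "le_exp a c \<Longrightarrow> le_exp b c \<Longrightarrow> join_exp a b = join_exp b a"
  and join_comp_commute: "le_comp M P \<Longrightarrow> le_comp N P \<Longrightarrow> join_comp M N = join_comp N M"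
  by (induction a c and M P arbitrary: b and N rule: le_exp_le_comp.inducts) auto

lemma join_exp_least: "le_exp a c \<Longrightarrow> le_exp b c \<Longrightarrow> le_exp (join_exp a b) c"
  and join_comp_least: "le_comp M P \<Longrightarrow> le_comp N P \<Longrightarrow> le_comp (join_comp M N) P"
  by (induction a c and M P arbitrary: b and N rule: le_exp_le_comp.inducts) auto

lemma join_exp_assoc:
    "le_exp a c \<Longrightarrow> le_exp b c \<Longrightarrow> le_exp d c \<Longrightarrow>
     join_exp (join_exp a b) d = join_exp a (join_exp b d)"
  and join_comp_assoc:
    "le_comp M P \<Longrightarrow> le_comp N P \<Longrightarrow> le_comp K P \<Longrightarrow>
     join_comp (join_comp M N) K = join_comp M (join_comp N K)"
  by (induction a c and M P arbitrary: b d and N K rule: le_exp_le_comp.inducts) auto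

lemma join_val_commute: "le_val a c \<Longrightarrow> le_val b c \<Longrightarrow> join_val a b = join_val b a"
proof (induction a c arbitrary: b rule: le_val.induct)
  case (6 \<rho> \<rho>' M M' f x)
  then show ?case
    by (cases "b = VHole") (auto simp: join_comp_commute)
qed auto

lemma join_val_least: "le_val a c \<Longrightarrow> le_val b c \<Longrightarrow> le_val (join_val a b) c"
proof (induction a c arbitrary: b rule: le_val.induct)
  case (6 \<rho> \<rho>' M M' f x)
  then show ?case
    by (cases "b = VHole") (auto simp: join_comp_least)
qed auto

lemma join_val_assoc:
  "le_val a c \<Longrightarrow> le_val b c \<Longrightarrow> le_val d c \<Longrightarrow> join_val (join_val a b) d = join_val a (join_val b d)"
proof (induction a c arbitrary: b d rule: le_val.induct)
  case (6 \<rho> \<rho>' M M' f x)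
  then show ?case
    by (cases "b = VHole"; cases "d = VHole") (auto simp: join_comp_assoc)
qed auto

lemma join_val_interchange:
  assumes "le_val a e" "le_val b e" "le_val c e" "le_val d e"
  shows "join_val (join_val a b) (join_val c d) = join_val (join_val a c) (join_val b d)"
proof -
  have "join_val (join_val a b) (join_val c d) = join_val a (join_val (join_val b c) d)"
    using assms by (simp add: join_val_assoc join_val_least)
  also have "join_val b c = join_val c b"
    using assms by (simp add: join_val_commute)
  also have "join_val a (join_val (join_val c b) d) = join_val (join_val a c) (join_val b d)"
    using assms by (simp add: join_val_assoc join_val_least)
  finally show ?thesis .
qed

lemma join_env_apply: "join_env \<rho> \<rho>' z = join_val (\<rho> z) (\<rho>' z)"
  by (simp add: join_env_def)

lemma join_store_apply: "join_store \<mu> \<mu>' l = join_val (\<mu> l) (\<mu>' l)"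
  by (simp add: join_store_def)

lemma hole_env_apply: "hole_env z = VHole"
  by (simp add: hole_env_def)

lemma hole_store_apply: "hole_store l = VHole"
  by (simp add: hole_store_def)

lemma join_env_hole_left [simp]: "join_env hole_env \<rho> = \<rho>"
  and join_env_hole_right [simp]: "join_env \<rho> hole_env = \<rho>"
  and join_store_hole_left [simp]: "join_store hole_store \<mu> = \<mu>"
  by (simp_all add: fun_eq_iff join_env_apply join_store_apply hole_env_apply hole_store_apply)

lemma join_env_upd: "join_env (\<rho>(x := v)) (\<rho>'(x := v')) = (join_env \<rho> \<rho>')(x := join_val v v')"
  and join_store_upd: "join_store (\<mu>(l := v)) (\<mu>'(l := v')) = (join_store \<mu> \<mu>')(l := join_val v v')"
  by (simp_all add: fun_eq_iff join_env_apply join_store_apply)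

lemma le_env_apply: "le_env \<rho> \<rho>' \<Longrightarrow> le_val (\<rho> z) (\<rho>' z)"
  by (simp add: le_env_def)

lemma le_store_apply: "le_store \<mu> \<mu>' \<Longrightarrow> le_val (\<mu> l) (\<mu>' l)"
  by (simp add: le_store_def)

lemma le_env_hole [simp]: "le_env hole_env \<rho>"
  by (simp add: le_env_def hole_env_apply)

lemma le_env_upd_hole: "le_env \<rho> (\<rho>'(x := v)) \<Longrightarrow> le_env (\<rho>(x := VHole)) \<rho>'"
  and le_store_upd_hole: "le_store \<mu> (\<mu>'(l := v)) \<Longrightarrow> le_store (\<mu>(l := VHole)) \<mu>'"
  unfolding le_env_def le_store_def by (metis fun_upd_apply le_val_hole)+

lemma join_env_least: "le_env \<rho>1 \<rho> \<Longrightarrow> le_env \<rho>2 \<rho> \<Longrightarrow> le_env (join_env \<rho>1 \<rho>2) \<rho>"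
  and join_store_least: "le_store \<mu>1 \<mu> \<Longrightarrow> le_store \<mu>2 \<mu> \<Longrightarrow> le_store (join_store \<mu>1 \<mu>2) \<mu>"
  by (simp_all add: le_env_def le_store_def join_env_apply join_store_apply join_val_least)

lemma join_env_commute: "le_env \<rho>1 \<rho> \<Longrightarrow> le_env \<rho>2 \<rho> \<Longrightarrow> join_env \<rho>1 \<rho>2 = join_env \<rho>2 \<rho>1"
  and join_store_commute: "le_store \<mu>1 \<mu> \<Longrightarrow> le_store \<mu>2 \<mu> \<Longrightarrow> join_store \<mu>1 \<mu>2 = join_store \<mu>2 \<mu>1"
  unfolding le_env_def le_store_def fun_eq_iff join_env_apply join_store_apply
  by (auto intro: join_val_commute)

lemma join_store_assoc:
  "le_store \<mu>1 \<mu> \<Longrightarrow> le_store \<mu>2 \<mu> \<Longrightarrow> le_store \<mu>3 \<mu> \<Longrightarrow>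
   join_store (join_store \<mu>1 \<mu>2) \<mu>3 = join_store \<mu>1 (join_store \<mu>2 \<mu>3)"
  unfolding le_store_def fun_eq_iff join_store_apply by (auto intro: join_val_assoc)

lemma join_env_interchange:
    "le_env \<rho>1 \<rho> \<Longrightarrow> le_env \<rho>2 \<rho> \<Longrightarrow> le_env \<rho>3 \<rho> \<Longrightarrow> le_env \<rho>4 \<rho> \<Longrightarrow>
     join_env (join_env \<rho>1 \<rho>2) (join_env \<rho>3 \<rho>4) = join_env (join_env \<rho>1 \<rho>3) (join_env \<rho>2 \<rho>4)"
  and join_store_interchange:
    "le_store \<mu>1 \<mu> \<Longrightarrow> le_store \<mu>2 \<mu> \<Longrightarrow> le_store \<mu>3 \<mu> \<Longrightarrow> le_store \<mu>4 \<mu> \<Longrightarrow>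
     join_store (join_store \<mu>1 \<mu>2) (join_store \<mu>3 \<mu>4) =
     join_store (join_store \<mu>1 \<mu>3) (join_store \<mu>2 \<mu>4)"
  unfolding le_env_def le_store_def fun_eq_iff join_env_apply join_store_apply
  by (auto intro: join_val_interchange)

lemma join_trace_least: "le_trace U1 T \<Longrightarrow> le_trace U2 T \<Longrightarrow> le_trace (join_trace U1 U2) T"
  by (induction U1 T arbitrary: U2 rule: le_trace.induct) (auto simp: join_exp_least)

lemma join_trace_hole_right: "le_trace U T \<Longrightarrow> join_trace U (THole (outcome T) (writes T)) = U"
  by (induction U T rule: le_trace.induct) auto

lemma join_trace_commute: "le_trace U1 T \<Longrightarrow> le_trace U2 T \<Longrightarrow> join_trace U1 U2 = join_trace U2 U1"
  by (induction U1 T arbitrary: U2 rule: le_trace.induct)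
    (auto simp: join_exp_commute join_trace_hole_right)

section \<open>Backward slicing of expressions\<close>

lemma eslice_hole_exists: "\<exists>\<rho> e'. eslice VHole e \<rho> e' \<and> le_env \<rho> \<sigma> \<and> le_exp e' e"
  by (intro exI[of _ hole_env] exI[of _ EHole]) (auto intro: eslice.intros)

lemma eslice_exists:
  "eval_exp \<sigma> e v \<Longrightarrow> le_val u v \<Longrightarrow> \<exists>\<rho> e'. eslice u e \<rho> e' \<and> le_env \<rho> \<sigma> \<and> le_exp e' e"
proof (induction arbitrary: u rule: eval_exp.induct)
  case (1 \<sigma> x)
  show ?case
  proof (cases "u = VHole")
    case False
    then have "eslice u (EVar x) (hole_env(x := u)) (EVar x)"
      by (rule eslice.intros)
    with 1 show ?thesis
      by (force simp: le_env_def hole_env_apply)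
  qed (use eslice_hole_exists in blast)
next
  case (2 \<sigma>)
  show ?case
  proof (cases "u = VHole")
    case False
    with 2 show ?thesis
      by (intro exI[of _ hole_env] exI[of _ EUnit]) (auto intro: eslice.intros)
  qed (use eslice_hole_exists in blast)
next
  case (3 \<sigma> f x M)
  show ?case
  proof (cases "u = VHole")
    case False
    with 3 show ?thesis
      by (auto intro: eslice.intros simp: le_env_def)
  qed (use eslice_hole_exists in blast)
next
  case (4 \<sigma> e v)
  show ?case
  proof (cases "u = VHole")
    case False
    with 4 show ?thesis
      by (fastforce intro: eslice.intros)
  qed (use eslice_hole_exists in blast)
next
  case (5 \<sigma> e v)
  show ?case
  proof (cases "u = VHole")
    case False
    with 5 show ?thesis
      by (fastforce intro: eslice.intros)
  qed (use eslice_hole_exists in blast)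
next
  case (6 \<sigma> e1 v1 e2 v2)
  show ?case
  proof (cases "u = VHole")
    case False
    with 6 show ?thesis
      by (fastforce intro: eslice.intros join_env_least)
  qed (use eslice_hole_exists in blast)
next
  case (7 \<sigma> e v1 v2)
  show ?case
  proof (cases "u = VHole")
    case False
    with 7(2)[of "VPair u VHole"] 7(3) show ?thesis
      by (fastforce intro: eslice.intros)
  qed (use eslice_hole_exists in blast)
next
  case (8 \<sigma> e v1 v2)
  show ?case
  proof (cases "u = VHole")
    case False
    with 8(2)[of "VPair VHole u"] 8(3) show ?thesis
      by (fastforce intro: eslice.intros)
  qed (use eslice_hole_exists in blast)
qed

inductive_cases eslice_holeE: "eslice VHole e \<rho> e'"
inductive_cases eslice_VarE: "eslice v (EVar x) \<rho> e'"
inductive_cases eslice_FunE: "eslice v (EFun f x M) \<rho> e'"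
inductive_cases eslice_UnitE: "eslice v EUnit \<rho> e'"
inductive_cases eslice_InlE: "eslice v (EInl e) \<rho> e'"
inductive_cases eslice_InrE: "eslice v (EInr e) \<rho> e'"
inductive_cases eslice_PairE: "eslice v (EPair e1 e2) \<rho> e'"
inductive_cases eslice_FstE: "eslice v (EFst e) \<rho> e'"
inductive_cases eslice_SndE: "eslice v (ESnd e) \<rho> e'"

lemma eslice_deterministic: "eslice u e \<rho> e' \<Longrightarrow> eslice u e \<rho>' e'' \<Longrightarrow> \<rho>' = \<rho> \<and> e'' = e'"
  by (induction arbitrary: \<rho>' e'' rule: eslice.induct)
    (blast elim: eslice_holeE eslice_VarE eslice_FunE eslice_UnitE eslice_InlE eslice_InrE
       eslice_PairE eslice_FstE eslice_SndE)+

lemma eslice_hole_iff: "eslice VHole e \<rho> e' \<longleftrightarrow> \<rho> = hole_env \<and> e' = EHole"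
  by (auto elim: eslice_holeE intro: eslice.intros)

lemma eslice_le:
  "eval_exp \<sigma> e v \<Longrightarrow> le_val u v \<Longrightarrow> eslice u e \<rho> e' \<Longrightarrow> le_env \<rho> \<sigma> \<and> le_exp e' e"
  using eslice_exists eslice_deterministic by metis

lemma eslice_join_hole:
  assumes "eslice u e \<rho> a" "eslice u' e \<rho>' a'" "u = VHole \<or> u' = VHole"
  shows "eslice (join_val u u') e (join_env \<rho> \<rho>') (join_exp a a')"
  using assms by (auto simp: eslice_hole_iff)

lemma eslice_join:
  "eval_exp \<sigma> e v \<Longrightarrow> le_val u v \<Longrightarrow> le_val u' v \<Longrightarrow> eslice u e \<rho> a \<Longrightarrow> eslice u' e \<rho>' a' \<Longrightarrow>
   eslice (join_val u u') e (join_env \<rho> \<rho>') (join_exp a a')"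
proof (induction arbitrary: u u' \<rho> \<rho>' a a' rule: eval_exp.induct)
  case (1 \<sigma> x)
  show ?case
  proof (cases "u = VHole \<or> u' = VHole")
    case False
    with 1 have "\<rho> = hole_env(x := u)" "\<rho>' = hole_env(x := u')" "a = EVar x" "a' = EVar x"
      by (auto elim: eslice_VarE)
    moreover have "eslice (join_val u u') (EVar x) (hole_env(x := join_val u u')) (EVar x)"
      using False by (intro eslice.intros) simp
    ultimately show ?thesis
      by (simp only: join_env_upd join_env_hole_left join_exp.simps)
  qed (use 1 eslice_join_hole in blast)
next
  case (2 \<sigma>)
  show ?case
  proof (cases "u = VHole \<or> u' = VHole")
    case False
    with 2 show ?thesis
      by (fastforce elim!: eslice_UnitE intro: eslice.intros)
  qed (use 2 eslice_join_hole in blast)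
next
  case (3 \<sigma> f x M)
  show ?case
  proof (cases "u = VHole \<or> u' = VHole")
    case False
    with 3 show ?thesis
      by (fastforce elim!: eslice_FunE intro: eslice.intros simp: join_env_def)
  qed (use 3 eslice_join_hole in blast)
next
  case (4 \<sigma> e v)
  show ?case
  proof (cases "u = VHole \<or> u' = VHole")
    case False
    with 4 show ?thesis
      by (fastforce elim!: eslice_InlE intro: eslice.intros)
  qed (use 4 eslice_join_hole in blast)
next
  case (5 \<sigma> e v)
  show ?case
  proof (cases "u = VHole \<or> u' = VHole")
    case False
    with 5 show ?thesis
      by (fastforce elim!: eslice_InrE intro: eslice.intros)
  qed (use 5 eslice_join_hole in blast)
next
  case (6 \<sigma> e1 v1 e2 v2)
  show ?case
  proof (cases "u = VHole \<or> u' = VHole")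
    case False
    with 6 obtain w1 w2 w1' w2' \<rho>1 \<rho>2 \<rho>1' \<rho>2' a1 a2 a1' a2' where
      u: "u = VPair w1 w2" "u' = VPair w1' w2'"
        "le_val w1 v1" "le_val w2 v2" "le_val w1' v1" "le_val w2' v2" and
      s: "eslice w1 e1 \<rho>1 a1" "eslice w2 e2 \<rho>2 a2" "eslice w1' e1 \<rho>1' a1'" "eslice w2' e2 \<rho>2' a2'" and
      eqs: "\<rho> = join_env \<rho>1 \<rho>2" "\<rho>' = join_env \<rho>1' \<rho>2'" "a = EPair a1 a2" "a' = EPair a1' a2'"
      by (fastforce elim!: eslice_PairE)
    have "le_env \<rho>1 \<sigma>" "le_env \<rho>2 \<sigma>" "le_env \<rho>1' \<sigma>" "le_env \<rho>2' \<sigma>"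
      using eslice_le 6(1,2) u s by blast+
    then have "join_env \<rho> \<rho>' = join_env (join_env \<rho>1 \<rho>1') (join_env \<rho>2 \<rho>2')"
      unfolding eqs by (rule join_env_interchange)
    with 6(3)[OF u(3,5) s(1,3)] 6(4)[OF u(4,6) s(2,4)] show ?thesis
      unfolding u eqs by (auto intro: eslice.intros)
  qed (use 6 eslice_join_hole in blast)
next
  case (7 \<sigma> e v1 v2)
  show ?case
  proof (cases "u = VHole \<or> u' = VHole")
    case False
    with 7(5,6) obtain b b' where
      s: "eslice (VPair u VHole) e \<rho> b" "eslice (VPair u' VHole) e \<rho>' b'" "a = EFst b" "a' = EFst b'"
      by (auto elim!: eslice_FstE)
    have "eslice (VPair (join_val u u') VHole) e (join_env \<rho> \<rho>') (join_exp b b')"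
      using 7(2)[OF _ _ s(1,2)] 7(3,4) by simp
    with False show ?thesis
      unfolding s by (auto intro: eslice.intros)
  qed (use 7 eslice_join_hole in blast)
next
  case (8 \<sigma> e v1 v2)
  show ?case
  proof (cases "u = VHole \<or> u' = VHole")
    case False
    with 8(5,6) obtain b b' where
      s: "eslice (VPair VHole u) e \<rho> b" "eslice (VPair VHole u') e \<rho>' b'" "a = ESnd b" "a' = ESnd b'"
      by (auto elim!: eslice_SndE)
    have "eslice (VPair VHole (join_val u u')) e (join_env \<rho> \<rho>') (join_exp b b')"
      using 8(2)[OF _ _ s(1,2)] 8(3,4) by simp
    with False show ?thesis
      unfolding s by (auto intro: eslice.intros)
  qed (use 8 eslice_join_hole in blast)
qed

section \<open>Backward slicing of computations\<close>

lemma eval_outcome: "eval T \<sigma> \<nu> M \<nu>' S \<Longrightarrow> \<exists>v. S = Res (outcome T) v"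
  by (induction rule: eval.induct) auto

lemma eval_unwritten: "eval T \<sigma> \<nu> M \<nu>' S \<Longrightarrow> l \<notin> writes T \<Longrightarrow> \<nu>' l = \<nu> l"
  by (induction rule: eval.induct) auto

lemma erase_eq_iff: "erase \<mu> L = \<mu> \<longleftrightarrow> (\<forall>l\<in>L. \<mu> l = VHole)"
  unfolding erase_def fun_eq_iff by auto

lemma erased_store_le:
  assumes "eval T \<sigma> \<nu> M \<nu>' S" "le_store \<mu> \<nu>'" "erase \<mu> (writes T) = \<mu>"
  shows "le_store \<mu> \<nu>"
  unfolding le_store_def
proof
  fix l
  show "le_val (\<mu> l) (\<nu> l)"
    using assms eval_unwritten[OF assms(1), of l] le_store_apply[OF assms(2), of l]
    by (cases "l \<in> writes T") (auto simp: erase_eq_iff)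
qed

lemma box_slice:
  assumes "eval T \<sigma> \<nu> M \<nu>' S" "le_store \<mu> \<nu>'" "le_res R S" "box_applies \<mu> R T"
  shows "bslice \<mu> R T hole_env \<mu> CHole (THole (outcome T) (writes T)) \<and> le_store \<mu> \<nu>"
proof -
  obtain v where "S = Res (outcome T) v"
    using eval_outcome[OF assms(1)] ..
  with assms(3,4) have R: "R = Res (outcome T) VHole" and er: "erase \<mu> (writes T) = \<mu>"
    by (auto simp: box_applies_def)
  show ?thesis
    unfolding R using slice_box[OF er] erased_store_le[OF assms(1,2) er] by simp
qed

text \<open>Rule B-App slices the function expression against \<open>v\<^sub>1 \<squnion> \<langle>\<rho>, fun f(x). M\<rangle>\<close>, where
  \<open>\<rho>[f \<mapsto> v\<^sub>1][x \<mapsto> v\<^sub>2]\<close> is the slice of the environment of the body \<open>M\<close>.\<close>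

definition closure_slice :: "env \<Rightarrow> var \<Rightarrow> var \<Rightarrow> comp \<Rightarrow> val" where
  "closure_slice \<rho> f x M = join_val ((\<rho>(x := VHole)) f) (VClo ((\<rho>(x := VHole))(f := VHole)) f x M)"

lemma bslice_appI:
  "\<not> box_applies \<mu> R (TApp e1 e2 f x T) \<Longrightarrow> bslice \<mu> R T \<rho> \<mu>' M U \<Longrightarrow>
   eslice (\<rho> x) e2 \<rho>2 e2' \<Longrightarrow> eslice (closure_slice \<rho> f x M) e1 \<rho>1 e1' \<Longrightarrow>
   bslice \<mu> R (TApp e1 e2 f x T) (join_env \<rho>1 \<rho>2) \<mu>' (App e1' e2') (TApp e1' e2' f x U)"
  unfolding closure_slice_def by (rule bslice.app)

lemma closure_slice_parts_le:
  assumes "le_env \<rho> ((\<rho>'(f := VClo \<rho>' f x M))(x := v))" "le_comp N M"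
  shows "le_val ((\<rho>(x := VHole)) f) (VClo \<rho>' f x M)"
    and "le_val (VClo ((\<rho>(x := VHole))(f := VHole)) f x N) (VClo \<rho>' f x M)"
proof -
  show "le_val ((\<rho>(x := VHole)) f) (VClo \<rho>' f x M)"
    using le_env_apply[OF assms(1), of f] by (cases "f = x") auto
  have "le_val (((\<rho>(x := VHole))(f := VHole)) z) (\<rho>' z)" for z
    using le_env_apply[OF assms(1), of z] by (cases "z = f"; cases "z = x") auto
  with assms(2) show "le_val (VClo ((\<rho>(x := VHole))(f := VHole)) f x N) (VClo \<rho>' f x M)"
    by simp
qed

lemma closure_slice_le:
  "le_env \<rho> ((\<rho>'(f := VClo \<rho>' f x M))(x := v)) \<Longrightarrow> le_comp N M \<Longrightarrow>
   le_val (closure_slice \<rho> f x N) (VClo \<rho>' f x M)"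
  unfolding closure_slice_def by (rule join_val_least[OF closure_slice_parts_le])

lemma closure_slice_join:
  assumes "le_env \<rho>1 ((\<rho>'(f := VClo \<rho>' f x M))(x := v))" "le_comp N1 M"
    and "le_env \<rho>2 ((\<rho>'(f := VClo \<rho>' f x M))(x := v))" "le_comp N2 M"
  shows "join_val (closure_slice \<rho>1 f x N1) (closure_slice \<rho>2 f x N2) =
         closure_slice (join_env \<rho>1 \<rho>2) f x (join_comp N1 N2)"
proof -
  have "join_val (closure_slice \<rho>1 f x N1) (closure_slice \<rho>2 f x N2) =
     join_val (join_val ((\<rho>1(x := VHole)) f) ((\<rho>2(x := VHole)) f))
       (join_val (VClo ((\<rho>1(x := VHole))(f := VHole)) f x N1)
         (VClo ((\<rho>2(x := VHole))(f := VHole)) f x N2))"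
    unfolding closure_slice_def
    by (rule join_val_interchange[OF closure_slice_parts_le[OF assms(1,2)]
          closure_slice_parts_le[OF assms(3,4)]])
  also have "\<dots> = closure_slice (join_env \<rho>1 \<rho>2) f x (join_comp N1 N2)"
  proof -
    have "join_val ((\<rho>1(x := VHole)) f) ((\<rho>2(x := VHole)) f) = ((join_env \<rho>1 \<rho>2)(x := VHole)) f"
      by (simp add: join_env_apply)
    moreover have "(\<lambda>z. join_val (((\<rho>1(x := VHole))(f := VHole)) z) (((\<rho>2(x := VHole))(f := VHole)) z)) =
        ((join_env \<rho>1 \<rho>2)(x := VHole))(f := VHole)"
      by (simp add: fun_eq_iff join_env_apply)
    ultimately show ?thesis
      by (simp only: closure_slice_def join_val.simps val.case)
  qed
  finally show ?thesis .
qed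

subsection \<open>Uniqueness of bounded slices\<close>

text \<open>Slices are compared modulo the binder names of let and try, which rules B-LetFail and B-Try
  leave unconstrained.\<close>

primrec strip_exp :: "exp \<Rightarrow> exp" and strip_comp :: "comp \<Rightarrow> comp" where
  "strip_exp (EVar x) = EVar x"
| "strip_exp EUnit = EUnit"
| "strip_exp (EInl a) = EInl (strip_exp a)"
| "strip_exp (EInr a) = EInr (strip_exp a)"
| "strip_exp (EPair a b) = EPair (strip_exp a) (strip_exp b)"
| "strip_exp (EFst a) = EFst (strip_exp a)"
| "strip_exp (ESnd a) = ESnd (strip_exp a)"
| "strip_exp (EFun f x M) = EFun f x (strip_comp M)"
| "strip_exp EHole = EHole"
| "strip_comp (Return a) = Return (strip_exp a)"
| "strip_comp (Let x M1 M2) = Let [] (strip_comp M1) (strip_comp M2)"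
| "strip_comp (App a b) = App (strip_exp a) (strip_exp b)"
| "strip_comp (Case a x M1 y M2) = Case (strip_exp a) x (strip_comp M1) y (strip_comp M2)"
| "strip_comp (Raise a) = Raise (strip_exp a)"
| "strip_comp (Try M1 x M2) = Try (strip_comp M1) [] (strip_comp M2)"
| "strip_comp (Ref a) = Ref (strip_exp a)"
| "strip_comp (Assign a b) = Assign (strip_exp a) (strip_exp b)"
| "strip_comp (Deref a) = Deref (strip_exp a)"
| "strip_comp CHole = CHole"

primrec strip_val :: "val \<Rightarrow> val" where
  "strip_val VUnit = VUnit"
| "strip_val (VInl a) = VInl (strip_val a)"
| "strip_val (VInr a) = VInr (strip_val a)"
| "strip_val (VPair a b) = VPair (strip_val a) (strip_val b)"
| "strip_val (VClo \<rho> f x M) = VClo (\<lambda>z. strip_val (\<rho> z)) f x (strip_comp M)"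
| "strip_val (VLoc l) = VLoc l"
| "strip_val VHole = VHole"

definition strip_fun :: "('a \<Rightarrow> val) \<Rightarrow> 'a \<Rightarrow> val" where
  "strip_fun \<rho> = (\<lambda>z. strip_val (\<rho> z))"

primrec strip_trace :: "trace \<Rightarrow> trace" where
  "strip_trace (TReturn a) = TReturn (strip_exp a)"
| "strip_trace (TLetF T) = TLetF (strip_trace T)"
| "strip_trace (TLetS T1 x T2) = TLetS (strip_trace T1) x (strip_trace T2)"
| "strip_trace (TApp a b f x T) = TApp (strip_exp a) (strip_exp b) f x (strip_trace T)"
| "strip_trace (TCaseL a x T y) = TCaseL (strip_exp a) x (strip_trace T) y"
| "strip_trace (TCaseR a x y T) = TCaseR (strip_exp a) x y (strip_trace T)"
| "strip_trace (TRaise a) = TRaise (strip_exp a)"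
| "strip_trace (TTryS T) = TTryS (strip_trace T)"
| "strip_trace (TTryF T1 x T2) = TTryF (strip_trace T1) x (strip_trace T2)"
| "strip_trace (TRef l a) = TRef l (strip_exp a)"
| "strip_trace (TAssign a l b) = TAssign (strip_exp a) l (strip_exp b)"
| "strip_trace (TDeref l a) = TDeref l (strip_exp a)"
| "strip_trace (THole k L) = THole k L"

fun strip_res :: "result \<Rightarrow> result" where
  "strip_res (Res k v) = Res k (strip_val v)"

lemma strip_join_exp: "strip_exp (join_exp a b) = join_exp (strip_exp a) (strip_exp b)"
  and strip_join_comp: "strip_comp (join_comp M N) = join_comp (strip_comp M) (strip_comp N)"
  by (induction a and M arbitrary: b and N) (auto split: exp.split comp.split)

lemma strip_join_val: "strip_val (join_val a b) = join_val (strip_val a) (strip_val b)"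
proof (induction a arbitrary: b)
  case (VClo \<rho> f x M)
  then show ?case
    by (cases b) (auto simp: strip_join_comp)
qed (auto split: val.split)

lemma strip_fun_apply: "strip_fun \<rho> z = strip_val (\<rho> z)"
  by (simp add: strip_fun_def)

lemma strip_fun_eqD: "strip_fun \<rho> = strip_fun \<rho>' \<Longrightarrow> strip_val (\<rho> z) = strip_val (\<rho>' z)"
  by (metis strip_fun_apply)

lemma strip_fun_join_env: "strip_fun (join_env \<rho> \<rho>') = join_env (strip_fun \<rho>) (strip_fun \<rho>')"
  and strip_fun_join_store: "strip_fun (join_store \<mu> \<mu>') = join_store (strip_fun \<mu>) (strip_fun \<mu>')"
  by (simp_all add: fun_eq_iff join_env_apply join_store_apply strip_join_val strip_fun_apply)

lemma strip_fun_upd: "strip_fun (\<rho>(x := v)) = (strip_fun \<rho>)(x := strip_val v)"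
  by (simp add: fun_eq_iff strip_fun_apply)

lemma strip_val_VClo: "strip_val (VClo \<rho> f x M) = VClo (strip_fun \<rho>) f x (strip_comp M)"
  by (simp add: strip_fun_def)

lemma strip_val_eq_hole_iff [simp]: "strip_val v = VHole \<longleftrightarrow> v = VHole"
  by (cases v) auto

lemma hole_eq_strip_val_iff [simp]: "VHole = strip_val v \<longleftrightarrow> v = VHole"
  by (cases v) auto

lemma strip_exp_eq_hole_iff [simp]: "strip_exp e = EHole \<longleftrightarrow> e = EHole"
  by (cases e) auto

lemma strip_comp_eq_hole_iff [simp]: "strip_comp M = CHole \<longleftrightarrow> M = CHole"
  by (cases M) auto

lemma strip_trace_eq_hole_iff [simp]: "strip_trace T = THole k L \<longleftrightarrow> T = THole k L"
  by (cases T) auto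

lemma strip_fun_hole_env [simp]: "strip_fun hole_env = hole_env"
  by (simp add: fun_eq_iff hole_env_apply strip_fun_apply)

lemma strip_fun_hole_store [simp]: "strip_fun hole_store = hole_store"
  by (simp add: fun_eq_iff hole_store_apply strip_fun_apply)

lemma strip_res_eq_Res_iff [simp]: "strip_res R = Res k w \<longleftrightarrow> (\<exists>v. R = Res k v \<and> strip_val v = w)"
  by (cases R) auto

lemma strip_exp_inj: "le_exp a c \<Longrightarrow> le_exp b c \<Longrightarrow> strip_exp b = strip_exp a \<Longrightarrow> b = a"
  and strip_comp_inj: "le_comp M P \<Longrightarrow> le_comp N P \<Longrightarrow> strip_comp N = strip_comp M \<Longrightarrow> N = M"
  by (induction a c and M P arbitrary: b and N rule: le_exp_le_comp.inducts) auto

lemma strip_val_inj: "le_val a c \<Longrightarrow> le_val b c \<Longrightarrow> strip_val b = strip_val a \<Longrightarrow> b = a"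
proof (induction a c arbitrary: b rule: le_val.induct)
  case (6 \<rho> \<rho>' M M' f x)
  show ?case
  proof (cases "b = VHole")
    case False
    with 6(3) obtain \<rho>2 M2 where b: "b = VClo \<rho>2 f x M2" "\<forall>z. le_val (\<rho>2 z) (\<rho>' z)" "le_comp M2 M'"
      by auto
    from 6(4) b(1) have "strip_val (\<rho>2 z) = strip_val (\<rho> z)" "strip_comp M2 = strip_comp M" for z
      by (auto dest: fun_cong)
    with 6(1,2) b show ?thesis
      by (auto intro!: ext strip_comp_inj)
  qed (use 6(4) in simp)
qed auto

lemma strip_trace_inj: "le_trace a c \<Longrightarrow> le_trace b c \<Longrightarrow> strip_trace b = strip_trace a \<Longrightarrow> b = a"
  by (induction a c arbitrary: b rule: le_trace.induct) (auto dest: strip_exp_inj)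

lemma strip_env_inj: "le_env \<rho>1 \<rho> \<Longrightarrow> le_env \<rho>2 \<rho> \<Longrightarrow> strip_fun \<rho>2 = strip_fun \<rho>1 \<Longrightarrow> \<rho>2 = \<rho>1"
  and strip_store_inj: "le_store \<mu>1 \<mu> \<Longrightarrow> le_store \<mu>2 \<mu> \<Longrightarrow> strip_fun \<mu>2 = strip_fun \<mu>1 \<Longrightarrow> \<mu>2 = \<mu>1"
  unfolding le_env_def le_store_def by (metis ext strip_fun_apply strip_val_inj)+

lemma strip_closure_slice:
  assumes "strip_fun \<rho>' = strip_fun \<rho>" "strip_comp M' = strip_comp M"
  shows "strip_val (closure_slice \<rho>' f x M') = strip_val (closure_slice \<rho> f x M)"
proof -
  have "strip_val ((\<rho>'(x := VHole)) f) = strip_val ((\<rho>(x := VHole)) f)"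
    using strip_fun_eqD[OF assms(1)] by simp
  moreover have "strip_fun ((\<rho>'(x := VHole))(f := VHole)) = strip_fun ((\<rho>(x := VHole))(f := VHole))"
    using assms(1) by (simp add: strip_fun_upd)
  ultimately show ?thesis
    using assms(2) by (simp only: closure_slice_def strip_join_val strip_val_VClo)
qed

lemma eslice_strip:
  "eslice u e \<rho> a \<Longrightarrow> eslice u' e \<rho>' a' \<Longrightarrow> strip_val u' = strip_val u \<Longrightarrow>
   strip_fun \<rho>' = strip_fun \<rho> \<and> strip_exp a' = strip_exp a"
proof (induction arbitrary: u' \<rho>' a' rule: eslice.induct)
  case (1 e)
  then show ?case
    by (simp add: eslice_hole_iff)
next
  case (2 v x)
  then have "u' \<noteq> VHole"
    by auto
  with 2(2) have "\<rho>' = hole_env(x := u') \<and> a' = EVar x"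
    by (auto elim: eslice_VarE)
  with 2(3) show ?case
    by (simp only: strip_fun_upd strip_fun_hole_env)
next
  case (3 \<rho> f x M M')
  then show ?case
    by (auto elim: eslice_FunE simp: strip_fun_def)
next
  case 4
  then show ?case
    by (auto elim: eslice_UnitE)
next
  case (5 v e \<rho> e')
  from 5(3,4) obtain w b where "u' = VInl w" "eslice w e \<rho>' b" "a' = EInl b"
    by (auto elim: eslice_InlE)
  with 5(2) 5(4) show ?case
    by simp
next
  case (6 v e \<rho> e')
  from 6(3,4) obtain w b where "u' = VInr w" "eslice w e \<rho>' b" "a' = EInr b"
    by (auto elim: eslice_InrE)
  with 6(2) 6(4) show ?case
    by simp
next
  case (7 v1 e1 \<rho>1 e1' v2 e2 \<rho>2 e2')
  from 7(5,6) obtain w1 w2 \<rho>1' b1 \<rho>2' b2 where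
    "u' = VPair w1 w2" "eslice w1 e1 \<rho>1' b1" "eslice w2 e2 \<rho>2' b2"
    "\<rho>' = join_env \<rho>1' \<rho>2'" "a' = EPair b1 b2"
    by (auto elim: eslice_PairE)
  with 7(3,4) 7(6) show ?case
    by (simp add: strip_fun_join_env)
next
  case (8 v e \<rho> e')
  from 8(1,4,5) obtain b where "eslice (VPair u' VHole) e \<rho>' b" "a' = EFst b"
    by (auto elim: eslice_FstE)
  with 8(3) 8(5) show ?case
    by simp
next
  case (9 v e \<rho> e')
  from 9(1,4,5) obtain b where "eslice (VPair VHole u') e \<rho>' b" "a' = ESnd b"
    by (auto elim: eslice_SndE)
  with 9(3) 9(5) show ?case
    by simp
qed

lemma box_appliesI: "erase \<mu> (writes T) = \<mu> \<Longrightarrow> box_applies \<mu> (Res k VHole) T"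
  by (simp add: box_applies_def)

lemma box_applies_strip:
  assumes "strip_fun \<mu>' = strip_fun \<mu>" "strip_res R' = strip_res R"
  shows "box_applies \<mu>' R' T = box_applies \<mu> R T"
proof -
  obtain k v where R: "R = Res k v"
    by (cases R)
  with assms(2) obtain v' where R': "R' = Res k v'" "strip_val v' = strip_val v"
    by auto
  have "v' = VHole \<longleftrightarrow> v = VHole"
    using R'(2) by (metis strip_val_eq_hole_iff)
  moreover have "(\<forall>l\<in>writes T. \<mu>' l = VHole) \<longleftrightarrow> (\<forall>l\<in>writes T. \<mu> l = VHole)"
    using strip_fun_eqD[OF assms(1)] by (metis strip_val_eq_hole_iff)
  ultimately show ?thesis
    unfolding box_applies_def erase_eq_iff R R'(1) by simp
qed

inductive_cases bslice_TReturnE: "bslice \<mu> R (TReturn e) \<rho> \<mu>0 N U"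
inductive_cases bslice_TRaiseE: "bslice \<mu> R (TRaise e) \<rho> \<mu>0 N U"
inductive_cases bslice_TRefE: "bslice \<mu> R (TRef l e) \<rho> \<mu>0 N U"
inductive_cases bslice_TAssignE: "bslice \<mu> R (TAssign e1 l e2) \<rho> \<mu>0 N U"
inductive_cases bslice_TDerefE: "bslice \<mu> R (TDeref l e) \<rho> \<mu>0 N U"
inductive_cases bslice_TLetSE: "bslice \<mu> R (TLetS T1 x T2) \<rho> \<mu>0 N U"
inductive_cases bslice_TLetFE: "bslice \<mu> R (TLetF T) \<rho> \<mu>0 N U"
inductive_cases bslice_TTryFE: "bslice \<mu> R (TTryF T1 x T2) \<rho> \<mu>0 N U"
inductive_cases bslice_TTrySE: "bslice \<mu> R (TTryS T) \<rho> \<mu>0 N U"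
inductive_cases bslice_TAppE: "bslice \<mu> R (TApp e1 e2 f x T) \<rho> \<mu>0 N U"
inductive_cases bslice_TCaseLE: "bslice \<mu> R (TCaseL e x T y) \<rho> \<mu>0 N U"
inductive_cases bslice_TCaseRE: "bslice \<mu> R (TCaseR e x y T) \<rho> \<mu>0 N U"

lemma bslice_TReturn_inv:
  assumes "bslice \<mu> R (TReturn e) \<rho> \<mu>0 N U" "\<not> box_applies \<mu> R (TReturn e)"
  obtains v a where "R = Res OVal v" "eslice v e \<rho> a" "\<mu>0 = \<mu>" "N = Return a" "U = TReturn a"
  using assms by (cases rule: bslice_TReturnE) (auto simp: box_applies_def intro: that)

lemma bslice_TRaise_inv:
  assumes "bslice \<mu> R (TRaise e) \<rho> \<mu>0 N U" "\<not> box_applies \<mu> R (TRaise e)"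
  obtains v a where "R = Res OExn v" "eslice v e \<rho> a" "\<mu>0 = \<mu>" "N = Raise a" "U = TRaise a"
  using assms by (cases rule: bslice_TRaiseE) (auto simp: box_applies_def intro: that)

lemma bslice_TRef_inv:
  assumes "bslice \<mu> R (TRef l e) \<rho> \<mu>0 N U" "\<not> box_applies \<mu> R (TRef l e)"
  obtains v a where "R = Res OVal v" "eslice (\<mu> l) e \<rho> a" "\<mu>0 = \<mu>(l := VHole)" "N = Ref a" "U = TRef l a"
  using assms by (cases rule: bslice_TRefE) (auto simp: box_applies_def intro: that)

lemma bslice_TAssign_inv:
  assumes "bslice \<mu> R (TAssign e1 l e2) \<rho> \<mu>0 N U" "\<not> box_applies \<mu> R (TAssign e1 l e2)"
  obtains v \<rho>2 a2 \<rho>1 a1 where "R = Res OVal v" "eslice (\<mu> l) e2 \<rho>2 a2" "eslice (VLoc l) e1 \<rho>1 a1"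
    "\<rho> = join_env \<rho>1 \<rho>2" "\<mu>0 = \<mu>(l := VHole)" "N = Assign a1 a2" "U = TAssign a1 l a2"
  using assms by (cases rule: bslice_TAssignE) (auto simp: box_applies_def intro: that)

lemma bslice_TDeref_inv:
  assumes "bslice \<mu> R (TDeref l e) \<rho> \<mu>0 N U" "\<not> box_applies \<mu> R (TDeref l e)"
  obtains v a where "R = Res OVal v" "eslice (VLoc l) e \<rho> a" "\<mu>0 = join_store \<mu> (hole_store(l := v))"
    "N = Deref a" "U = TDeref l a"
  using assms by (cases rule: bslice_TDerefE) (auto simp: box_applies_def intro: that)

lemma bslice_TLetS_inv:
  assumes "bslice \<mu> R (TLetS T1 x T2) \<rho> \<mu>0 N U" "\<not> box_applies \<mu> R (TLetS T1 x T2)"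
  obtains \<rho>0 \<mu>1 M2 U2 \<rho>1 M1 U1 where "bslice \<mu> R T2 \<rho>0 \<mu>1 M2 U2"
    "bslice \<mu>1 (Res OVal (\<rho>0 x)) T1 \<rho>1 \<mu>0 M1 U1" "\<rho> = join_env \<rho>1 (\<rho>0(x := VHole))"
    "N = Let x M1 M2" "U = TLetS U1 x U2"
  using assms by (cases rule: bslice_TLetSE) (auto simp: box_applies_def intro: that)

lemma bslice_TLetF_inv:
  assumes "bslice \<mu> R (TLetF T) \<rho> \<mu>0 N U" "\<not> box_applies \<mu> R (TLetF T)"
  obtains v M1 U1 x where "R = Res OExn v" "bslice \<mu> R T \<rho> \<mu>0 M1 U1" "N = Let x M1 CHole" "U = TLetF U1"
  using assms by (cases rule: bslice_TLetFE) (auto simp: box_applies_def intro: that)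

lemma bslice_TTryF_inv:
  assumes "bslice \<mu> R (TTryF T1 x T2) \<rho> \<mu>0 N U" "\<not> box_applies \<mu> R (TTryF T1 x T2)"
  obtains \<rho>0 \<mu>1 M2 U2 \<rho>1 M1 U1 where "bslice \<mu> R T2 \<rho>0 \<mu>1 M2 U2"
    "bslice \<mu>1 (Res OExn (\<rho>0 x)) T1 \<rho>1 \<mu>0 M1 U1" "\<rho> = join_env (\<rho>0(x := VHole)) \<rho>1"
    "N = Try M1 x M2" "U = TTryF U1 x U2"
  using assms by (cases rule: bslice_TTryFE) (auto simp: box_applies_def intro: that)

lemma bslice_TTryS_inv:
  assumes "bslice \<mu> R (TTryS T) \<rho> \<mu>0 N U" "\<not> box_applies \<mu> R (TTryS T)"
  obtains v M1 U1 x where "R = Res OVal v" "bslice \<mu> R T \<rho> \<mu>0 M1 U1" "N = Try M1 x CHole" "U = TTryS U1"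
  using assms by (cases rule: bslice_TTrySE) (auto simp: box_applies_def intro: that)

lemma bslice_TApp_inv:
  assumes "bslice \<mu> R (TApp e1 e2 f x T) \<rho> \<mu>0 N U" "\<not> box_applies \<mu> R (TApp e1 e2 f x T)"
  obtains \<rho>0 M U0 \<rho>2 a2 \<rho>1 a1 where "bslice \<mu> R T \<rho>0 \<mu>0 M U0" "eslice (\<rho>0 x) e2 \<rho>2 a2"
    "eslice (closure_slice \<rho>0 f x M) e1 \<rho>1 a1" "\<rho> = join_env \<rho>1 \<rho>2" "N = App a1 a2" "U = TApp a1 a2 f x U0"
  using assms unfolding closure_slice_def
  by (cases rule: bslice_TAppE) (auto simp: box_applies_def intro: that)

lemma bslice_TCaseL_inv:
  assumes "bslice \<mu> R (TCaseL e x T y) \<rho> \<mu>0 N U" "\<not> box_applies \<mu> R (TCaseL e x T y)"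
  obtains \<rho>0 M1 U0 \<rho>' a where "bslice \<mu> R T \<rho>0 \<mu>0 M1 U0" "eslice (VInl (\<rho>0 x)) e \<rho>' a"
    "\<rho> = join_env (\<rho>0(x := VHole)) \<rho>'" "N = Case a x M1 y CHole" "U = TCaseL a x U0 y"
  using assms by (cases rule: bslice_TCaseLE) (auto simp: box_applies_def intro: that)

lemma bslice_TCaseR_inv:
  assumes "bslice \<mu> R (TCaseR e x y T) \<rho> \<mu>0 N U" "\<not> box_applies \<mu> R (TCaseR e x y T)"
  obtains \<rho>0 M2 U0 \<rho>' a where "bslice \<mu> R T \<rho>0 \<mu>0 M2 U0" "eslice (VInr (\<rho>0 y)) e \<rho>' a"
    "\<rho> = join_env (\<rho>0(y := VHole)) \<rho>'" "N = Case a x CHole y M2" "U = TCaseR a x y U0"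
  using assms by (cases rule: bslice_TCaseRE) (auto simp: box_applies_def intro: that)

lemma bslice_strip:
  "bslice \<mu> R T \<rho> \<mu>0 N U \<Longrightarrow> bslice \<mu>' R' T \<rho>' \<mu>0' N' U' \<Longrightarrow>
   strip_fun \<mu>' = strip_fun \<mu> \<Longrightarrow> strip_res R' = strip_res R \<Longrightarrow>
   strip_fun \<rho>' = strip_fun \<rho> \<and> strip_fun \<mu>0' = strip_fun \<mu>0 \<and> strip_comp N' = strip_comp N \<and>
   strip_trace U' = strip_trace U"
proof (induction arbitrary: \<mu>' R' \<rho>' \<mu>0' N' U' rule: bslice.induct)
  case (slice_box \<mu> T k)
  from slice_box.prems(3) have R': "R' = Res k VHole"
    by auto
  with box_applies_strip[OF slice_box.prems(2,3)] box_appliesI[OF slice_box.hyps]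
  have "box_applies \<mu>' R' T"
    by simp
  with slice_box.prems(1,2) R' show ?case
    by (cases rule: bslice.cases) auto
next
  case (ret \<mu> v e \<rho> e')
  from box_applies_strip[OF ret.prems(2,3)] ret.hyps(1) have "\<not> box_applies \<mu>' R' (TReturn e)"
    by simp
  with ret.prems(1) obtain v' a where
    s: "R' = Res OVal v'" "eslice v' e \<rho>' a" "\<mu>0' = \<mu>'" "N' = Return a" "U' = TReturn a"
    by (rule bslice_TReturn_inv)
  from ret.prems(3) s(1) have "strip_val v' = strip_val v"
    by simp
  from eslice_strip[OF ret.hyps(2) s(2) this] ret.prems(2) show ?case
    unfolding s(3-5) by simp
next
  case (raise \<mu> v e \<rho> e')
  from box_applies_strip[OF raise.prems(2,3)] raise.hyps(1) have "\<not> box_applies \<mu>' R' (TRaise e)"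
    by simp
  with raise.prems(1) obtain v' a where
    s: "R' = Res OExn v'" "eslice v' e \<rho>' a" "\<mu>0' = \<mu>'" "N' = Raise a" "U' = TRaise a"
    by (rule bslice_TRaise_inv)
  from raise.prems(3) s(1) have "strip_val v' = strip_val v"
    by simp
  from eslice_strip[OF raise.hyps(2) s(2) this] raise.prems(2) show ?case
    unfolding s(3-5) by simp
next
  case (ref \<mu> v l e \<rho> e')
  from box_applies_strip[OF ref.prems(2,3)] ref.hyps(1) have "\<not> box_applies \<mu>' R' (TRef l e)"
    by simp
  with ref.prems(1) obtain v' a where
    s: "eslice (\<mu>' l) e \<rho>' a" "\<mu>0' = \<mu>'(l := VHole)" "N' = Ref a" "U' = TRef l a"
    by (rule bslice_TRef_inv)
  have "strip_fun \<mu>0' = strip_fun (\<mu>(l := VHole))"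
    unfolding s(2) strip_fun_upd using ref.prems(2) by simp
  with eslice_strip[OF ref.hyps(2) s(1) strip_fun_eqD[OF ref.prems(2)]] show ?case
    unfolding s(3,4) by (simp add: fun_upd_def)
next
  case (assign \<mu> v e1 l e2 \<rho>2 e2' \<rho>1 e1')
  from box_applies_strip[OF assign.prems(2,3)] assign.hyps(1)
  have "\<not> box_applies \<mu>' R' (TAssign e1 l e2)"
    by simp
  with assign.prems(1) obtain v' \<rho>2' a2 \<rho>1' a1 where
    s: "eslice (\<mu>' l) e2 \<rho>2' a2" "eslice (VLoc l) e1 \<rho>1' a1" "\<rho>' = join_env \<rho>1' \<rho>2'"
      "\<mu>0' = \<mu>'(l := VHole)" "N' = Assign a1 a2" "U' = TAssign a1 l a2"
    by (rule bslice_TAssign_inv)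
  have "strip_fun \<mu>0' = strip_fun (\<mu>(l := VHole))"
    unfolding s(4) strip_fun_upd using assign.prems(2) by simp
  with eslice_strip[OF assign.hyps(2) s(1) strip_fun_eqD[OF assign.prems(2)]]
    eslice_strip[OF assign.hyps(3) s(2)] show ?case
    unfolding s(3,5,6) by (simp add: strip_fun_join_env fun_upd_def)
next
  case (deref \<mu> v l e \<rho> e')
  from box_applies_strip[OF deref.prems(2,3)] deref.hyps(1) have "\<not> box_applies \<mu>' R' (TDeref l e)"
    by simp
  with deref.prems(1) obtain v' a where
    s: "R' = Res OVal v'" "eslice (VLoc l) e \<rho>' a" "\<mu>0' = join_store \<mu>' (hole_store(l := v'))"
      "N' = Deref a" "U' = TDeref l a"
    by (rule bslice_TDeref_inv)
  from deref.prems(3) s(1) have "strip_val v' = strip_val v"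
    by simp
  with deref.prems(2) have "strip_fun \<mu>0' = strip_fun (join_store \<mu> (hole_store(l := v)))"
    unfolding s(3) strip_fun_join_store strip_fun_upd by simp
  with eslice_strip[OF deref.hyps(2) s(2)] show ?case
    unfolding s(4,5) by simp
next
  case (lett \<mu> R T1 x T2 \<rho>0 \<mu>1 M2 U2 \<rho>1 \<mu>2 M1 U1)
  from box_applies_strip[OF lett.prems(2,3)] lett.hyps(1) have "\<not> box_applies \<mu>' R' (TLetS T1 x T2)"
    by simp
  with lett.prems(1) obtain \<rho>0' \<mu>1' M2' U2' \<rho>1' M1' U1' where
    s: "bslice \<mu>' R' T2 \<rho>0' \<mu>1' M2' U2'" "bslice \<mu>1' (Res OVal (\<rho>0' x)) T1 \<rho>1' \<mu>0' M1' U1'"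
      "\<rho>' = join_env \<rho>1' (\<rho>0'(x := VHole))" "N' = Let x M1' M2'" "U' = TLetS U1' x U2'"
    by (rule bslice_TLetS_inv)
  from lett.IH(1)[OF s(1) lett.prems(2,3)] have s2:
    "strip_fun \<rho>0' = strip_fun \<rho>0" "strip_fun \<mu>1' = strip_fun \<mu>1" "strip_comp M2' = strip_comp M2"
    "strip_trace U2' = strip_trace U2"
    by auto
  with lett.IH(2)[OF s(2)] have "strip_fun \<rho>1' = strip_fun \<rho>1 \<and> strip_fun \<mu>0' = strip_fun \<mu>2 \<and>
      strip_comp M1' = strip_comp M1 \<and> strip_trace U1' = strip_trace U1"
    using strip_fun_eqD[OF s2(1)] by simp
  with s2 show ?case
    unfolding s(3-5) by (simp add: strip_fun_join_env strip_fun_upd)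
next
  case (letfail \<mu> v T1 \<rho> \<mu>1 M1 U1 x)
  from box_applies_strip[OF letfail.prems(2,3)] letfail.hyps(1) have "\<not> box_applies \<mu>' R' (TLetF T1)"
    by simp
  with letfail.prems(1) obtain v' M1' U1' y where
    s: "bslice \<mu>' R' T1 \<rho>' \<mu>0' M1' U1'" "N' = Let y M1' CHole" "U' = TLetF U1'"
    by (rule bslice_TLetF_inv)
  from letfail.IH[OF s(1) letfail.prems(2,3)] show ?case
    unfolding s(2,3) by simp
next
  case (trysucc \<mu> v T1 \<rho> \<mu>1 M1 U1 x)
  from box_applies_strip[OF trysucc.prems(2,3)] trysucc.hyps(1) have "\<not> box_applies \<mu>' R' (TTryS T1)"
    by simp
  with trysucc.prems(1) obtain v' M1' U1' y where
    s: "bslice \<mu>' R' T1 \<rho>' \<mu>0' M1' U1'" "N' = Try M1' y CHole" "U' = TTryS U1'"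
    by (rule bslice_TTryS_inv)
  from trysucc.IH[OF s(1) trysucc.prems(2,3)] show ?case
    unfolding s(2,3) by simp
next
  case (tryfail \<mu> R T1 x T2 \<rho>0 \<mu>1 M2 U2 \<rho>1 \<mu>2 M1 U1)
  from box_applies_strip[OF tryfail.prems(2,3)] tryfail.hyps(1) have "\<not> box_applies \<mu>' R' (TTryF T1 x T2)"
    by simp
  with tryfail.prems(1) obtain \<rho>0' \<mu>1' M2' U2' \<rho>1' M1' U1' where
    s: "bslice \<mu>' R' T2 \<rho>0' \<mu>1' M2' U2'" "bslice \<mu>1' (Res OExn (\<rho>0' x)) T1 \<rho>1' \<mu>0' M1' U1'"
      "\<rho>' = join_env (\<rho>0'(x := VHole)) \<rho>1'" "N' = Try M1' x M2'" "U' = TTryF U1' x U2'"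
    by (rule bslice_TTryF_inv)
  from tryfail.IH(1)[OF s(1) tryfail.prems(2,3)] have s2:
    "strip_fun \<rho>0' = strip_fun \<rho>0" "strip_fun \<mu>1' = strip_fun \<mu>1" "strip_comp M2' = strip_comp M2"
    "strip_trace U2' = strip_trace U2"
    by auto
  with tryfail.IH(2)[OF s(2)] have "strip_fun \<rho>1' = strip_fun \<rho>1 \<and> strip_fun \<mu>0' = strip_fun \<mu>2 \<and>
      strip_comp M1' = strip_comp M1 \<and> strip_trace U1' = strip_trace U1"
    using strip_fun_eqD[OF s2(1)] by simp
  with s2 show ?case
    unfolding s(3-5) by (simp add: strip_fun_join_env strip_fun_upd)
next
  case (caseL \<mu> R e x T y \<rho>0 \<mu>1 M1 U \<rho>e e')
  from box_applies_strip[OF caseL.prems(2,3)] caseL.hyps(1) have "\<not> box_applies \<mu>' R' (TCaseL e x T y)"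
    by simp
  with caseL.prems(1) obtain \<rho>0' M1' U0 \<rho>e' a where
    s: "bslice \<mu>' R' T \<rho>0' \<mu>0' M1' U0" "eslice (VInl (\<rho>0' x)) e \<rho>e' a"
      "\<rho>' = join_env (\<rho>0'(x := VHole)) \<rho>e'" "N' = Case a x M1' y CHole" "U' = TCaseL a x U0 y"
    by (rule bslice_TCaseL_inv)
  from caseL.IH[OF s(1) caseL.prems(2,3)] have body:
    "strip_fun \<rho>0' = strip_fun \<rho>0" "strip_fun \<mu>0' = strip_fun \<mu>1" "strip_comp M1' = strip_comp M1"
    "strip_trace U0 = strip_trace U"
    by auto
  with eslice_strip[OF caseL.hyps(3) s(2)] show ?case
    unfolding s(3-5) using strip_fun_eqD[OF body(1), of x] by (simp add: strip_fun_join_env strip_fun_upd)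
next
  case (caseR \<mu> R e x y T \<rho>0 \<mu>1 M2 U \<rho>e e')
  from box_applies_strip[OF caseR.prems(2,3)] caseR.hyps(1) have "\<not> box_applies \<mu>' R' (TCaseR e x y T)"
    by simp
  with caseR.prems(1) obtain \<rho>0' M2' U0 \<rho>e' a where
    s: "bslice \<mu>' R' T \<rho>0' \<mu>0' M2' U0" "eslice (VInr (\<rho>0' y)) e \<rho>e' a"
      "\<rho>' = join_env (\<rho>0'(y := VHole)) \<rho>e'" "N' = Case a x CHole y M2'" "U' = TCaseR a x y U0"
    by (rule bslice_TCaseR_inv)
  from caseR.IH[OF s(1) caseR.prems(2,3)] have body:
    "strip_fun \<rho>0' = strip_fun \<rho>0" "strip_fun \<mu>0' = strip_fun \<mu>1" "strip_comp M2' = strip_comp M2"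
    "strip_trace U0 = strip_trace U"
    by auto
  with eslice_strip[OF caseR.hyps(3) s(2)] show ?case
    unfolding s(3-5) using strip_fun_eqD[OF body(1), of y] by (simp add: strip_fun_join_env strip_fun_upd)
next
  case (app \<mu> R e1 e2 f x T \<rho>0 \<mu>1 M U \<rho>2 e2' \<rho>1 e1')
  from box_applies_strip[OF app.prems(2,3)] app.hyps(1) have "\<not> box_applies \<mu>' R' (TApp e1 e2 f x T)"
    by simp
  with app.prems(1) obtain \<rho>0' M' U0 \<rho>2' a2 \<rho>1' a1 where
    s: "bslice \<mu>' R' T \<rho>0' \<mu>0' M' U0" "eslice (\<rho>0' x) e2 \<rho>2' a2"
      "eslice (closure_slice \<rho>0' f x M') e1 \<rho>1' a1" "\<rho>' = join_env \<rho>1' \<rho>2'" "N' = App a1 a2"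
      "U' = TApp a1 a2 f x U0"
    by (rule bslice_TApp_inv)
  from app.IH[OF s(1) app.prems(2,3)] have body:
    "strip_fun \<rho>0' = strip_fun \<rho>0" "strip_fun \<mu>0' = strip_fun \<mu>1" "strip_comp M' = strip_comp M"
    "strip_trace U0 = strip_trace U"
    by auto
  from app.hyps(4) have "eslice (closure_slice \<rho>0 f x M) e1 \<rho>1 e1'"
    by (simp only: closure_slice_def)
  from eslice_strip[OF this s(3) strip_closure_slice[OF body(1,3)]]
    eslice_strip[OF app.hyps(3) s(2) strip_fun_eqD[OF body(1)]] body show ?case
    unfolding s(4-6) by (simp add: strip_fun_join_env)
qed

lemma bslice_unique:
  assumes "bslice \<mu> R T \<rho> \<mu>0 N U" "bslice \<mu> R T \<rho>' \<mu>0' N' U'"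
    and "le_env \<rho> \<sigma>" "le_store \<mu>0 \<nu>" "le_comp N M" "le_trace U T"
    and "le_env \<rho>' \<sigma>" "le_store \<mu>0' \<nu>" "le_comp N' M" "le_trace U' T"
  shows "\<rho>' = \<rho> \<and> \<mu>0' = \<mu>0 \<and> N' = N \<and> U' = U"
  using bslice_strip[OF assms(1,2)] assms(3-) strip_env_inj strip_store_inj strip_comp_inj strip_trace_inj
  by metis

lemma bwd_eqI:
  assumes "bslice \<mu> R T \<rho> \<mu>0 N U" "le_env \<rho> \<sigma>" "le_store \<mu>0 \<nu>" "le_comp N M" "le_trace U T"
  shows "bwd \<sigma> \<nu> M T (\<mu>, R) = (\<rho>, \<mu>0, N, U)"
  unfolding bwd_def
proof (rule the_equality)
  fix q
  assume q: "q \<in> Prefix_cfg (\<sigma>, \<nu>, M, T) \<and>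
    (case (\<mu>, R) of (\<mu>1, R1) \<Rightarrow> case q of (\<rho>, \<mu>0, N, U) \<Rightarrow> bslice \<mu>1 R1 T \<rho> \<mu>0 N U)"
  obtain \<rho>' \<mu>0' N' U' where "q = (\<rho>', \<mu>0', N', U')"
    by (cases q) auto
  with q bslice_unique[OF assms(1) _ assms(2-5)] show "q = (\<rho>, \<mu>0, N, U)"
    by (auto simp: Prefix_cfg_def le_cfg_def)
qed (use assms in \<open>simp add: Prefix_cfg_def le_cfg_def\<close>)

subsection \<open>Joins of slices\<close>

lemma box_applies_join_rightD: "box_applies (join_store \<mu> \<mu>') R T \<Longrightarrow> box_applies \<mu>' R T"
  and box_applies_join: "erase \<mu> (writes T) = \<mu> \<Longrightarrow> box_applies \<mu>' R T \<Longrightarrow> box_applies (join_store \<mu> \<mu>') R T"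
  unfolding box_applies_def erase_eq_iff by (simp_all add: join_store_apply)

lemma not_box_applies_join: "\<not> box_applies \<mu> R T \<Longrightarrow> \<not> box_applies (join_store \<mu> \<mu>') (join_res R R') T"
  by (cases R; cases R') (auto simp: box_applies_def erase_eq_iff join_store_apply)

lemma erase_subset: "erase \<mu> L = \<mu> \<Longrightarrow> L' \<subseteq> L \<Longrightarrow> erase \<mu> L' = \<mu>"
  unfolding erase_eq_iff by blast

lemma erased_join_sliceI:
  "bslice \<mu>' R' T \<rho> \<mu>0 N U \<Longrightarrow> le_env \<rho> \<sigma> \<Longrightarrow> le_store \<mu>0 \<nu> \<Longrightarrow> le_comp N M \<Longrightarrow> le_trace U T \<Longrightarrow>
   bslice (join_store \<mu> \<mu>') R' T \<rho> (join_store \<mu> \<mu>0) N U \<Longrightarrow>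
   \<exists>\<rho> \<mu>0 N U. bslice \<mu>' R' T \<rho> \<mu>0 N U \<and> le_env \<rho> \<sigma> \<and> le_store \<mu>0 \<nu> \<and> le_comp N M \<and> le_trace U T \<and>
     bslice (join_store \<mu> \<mu>') R' T \<rho> (join_store \<mu> \<mu>0) N U"
  by blast

lemma erased_join_box_slice:
  assumes "eval T \<sigma> \<nu> M \<nu>' S" "le_store \<mu> \<nu>'" "erase \<mu> (writes T) = \<mu>" "le_store \<mu>' \<nu>'" "le_res R' S"
    and "box_applies \<mu>' R' T"
  shows "\<exists>\<rho> \<mu>0 N U. bslice \<mu>' R' T \<rho> \<mu>0 N U \<and> le_env \<rho> \<sigma> \<and> le_store \<mu>0 \<nu> \<and> le_comp N M \<and> le_trace U T \<and>
     bslice (join_store \<mu> \<mu>') R' T \<rho> (join_store \<mu> \<mu>0) N U"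
proof (rule erased_join_sliceI)
  show "bslice \<mu>' R' T hole_env \<mu>' CHole (THole (outcome T) (writes T))" "le_store \<mu>' \<nu>"
    using box_slice[OF assms(1,4,5,6)] by auto
  show "bslice (join_store \<mu> \<mu>') R' T hole_env (join_store \<mu> \<mu>') CHole (THole (outcome T) (writes T))"
    using box_slice[OF assms(1) join_store_least[OF assms(2,4)] assms(5) box_applies_join[OF assms(3,6)]]
    by auto
qed auto

text \<open>The case of the join property where one side is sliced by B-Slice\<open>\<box>\<close>, whose store \<open>\<mu>\<close> is
  empty on every location written by \<open>T\<close>.\<close>

lemma bslice_join_erased_store:
  "eval T \<sigma> \<nu> M \<nu>' S \<Longrightarrow> le_store \<mu> \<nu>' \<Longrightarrow> erase \<mu> (writes T) = \<mu> \<Longrightarrow> le_store \<mu>' \<nu>' \<Longrightarrow> le_res R' S \<Longrightarrow>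
   \<exists>\<rho> \<mu>0 N U. bslice \<mu>' R' T \<rho> \<mu>0 N U \<and> le_env \<rho> \<sigma> \<and> le_store \<mu>0 \<nu> \<and> le_comp N M \<and> le_trace U T \<and>
     bslice (join_store \<mu> \<mu>') R' T \<rho> (join_store \<mu> \<mu>0) N U"
proof (induction arbitrary: \<mu> \<mu>' R' rule: eval.induct)
  case (ret \<sigma> e v \<nu>)
  show ?case
  proof (cases "box_applies \<mu>' R' (TReturn e)")
    case False
    with box_applies_join_rightD have False': "\<not> box_applies (join_store \<mu> \<mu>') R' (TReturn e)"
      by blast
    from ret.prems obtain u where R': "R' = Res OVal u" "le_val u v"
      by auto
    with eslice_exists[OF ret.hyps] obtain \<rho> e' where s: "eslice u e \<rho> e'" "le_env \<rho> \<sigma>" "le_exp e' e"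
      by blast
    have "bslice \<mu>' R' (TReturn e) \<rho> \<mu>' (Return e') (TReturn e')"
      "bslice (join_store \<mu> \<mu>') R' (TReturn e) \<rho> (join_store \<mu> \<mu>') (Return e') (TReturn e')"
      using False False' s(1) unfolding R'(1) by (blast intro: bslice.ret)+
    then show ?thesis
      by (intro erased_join_sliceI) (use s ret.prems in auto)
  qed (rule erased_join_box_slice[OF eval.ret[OF ret.hyps] ret.prems])
next
  case (raise \<sigma> e v \<nu>)
  show ?case
  proof (cases "box_applies \<mu>' R' (TRaise e)")
    case False
    with box_applies_join_rightD have False': "\<not> box_applies (join_store \<mu> \<mu>') R' (TRaise e)"
      by blast
    from raise.prems obtain u where R': "R' = Res OExn u" "le_val u v"
      by auto
    with eslice_exists[OF raise.hyps] obtain \<rho> e' where s: "eslice u e \<rho> e'" "le_env \<rho> \<sigma>" "le_exp e' e"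
      by blast
    have "bslice \<mu>' R' (TRaise e) \<rho> \<mu>' (Raise e') (TRaise e')"
      "bslice (join_store \<mu> \<mu>') R' (TRaise e) \<rho> (join_store \<mu> \<mu>') (Raise e') (TRaise e')"
      using False False' s(1) unfolding R'(1) by (blast intro: bslice.raise)+
    then show ?thesis
      by (intro erased_join_sliceI) (use s raise.prems in auto)
  qed (rule erased_join_box_slice[OF eval.raise[OF raise.hyps] raise.prems])
next
  case (ref \<sigma> e v l \<nu>)
  show ?case
  proof (cases "box_applies \<mu>' R' (TRef l e)")
    case False
    with box_applies_join_rightD have False': "\<not> box_applies (join_store \<mu> \<mu>') R' (TRef l e)"
      by blast
    from ref.prems obtain u where R': "R' = Res OVal u"
      by auto
    from ref.prems(2) have "\<mu> l = VHole"
      by (simp add: erase_eq_iff)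
    then have jl: "join_store \<mu> \<mu>' l = \<mu>' l"
      and st: "(join_store \<mu> \<mu>')(l := VHole) = join_store \<mu> (\<mu>'(l := VHole))"
      by (simp_all add: fun_eq_iff join_store_apply)
    have "le_val (\<mu>' l) v"
      using le_store_apply[OF ref.prems(3), of l] by simp
    with eslice_exists[OF ref.hyps(1)] obtain \<rho> e' where
      s: "eslice (\<mu>' l) e \<rho> e'" "le_env \<rho> \<sigma>" "le_exp e' e"
      by blast
    have "bslice (join_store \<mu> \<mu>') R' (TRef l e) \<rho> (join_store \<mu> (\<mu>'(l := VHole))) (Ref e') (TRef l e')"
      using bslice.ref[OF False'[unfolded R'], of \<rho> e'] s(1) jl st R' by simp
    then show ?thesis
      by (rule erased_join_sliceI[rotated 5])
        (use False R' s le_store_upd_hole[OF ref.prems(3)] in \<open>auto intro: bslice.ref\<close>)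
  qed (rule erased_join_box_slice[OF eval.ref[OF ref.hyps] ref.prems])
next
  case (assign \<sigma> e1 l e2 v \<nu>)
  show ?case
  proof (cases "box_applies \<mu>' R' (TAssign e1 l e2)")
    case False
    with box_applies_join_rightD have False': "\<not> box_applies (join_store \<mu> \<mu>') R' (TAssign e1 l e2)"
      by blast
    from assign.prems obtain u where R': "R' = Res OVal u"
      by auto
    from assign.prems(2) have "\<mu> l = VHole"
      by (simp add: erase_eq_iff)
    then have jl: "join_store \<mu> \<mu>' l = \<mu>' l"
      and st: "(join_store \<mu> \<mu>')(l := VHole) = join_store \<mu> (\<mu>'(l := VHole))"
      by (simp_all add: fun_eq_iff join_store_apply)
    have "le_val (\<mu>' l) v"
      using le_store_apply[OF assign.prems(3), of l] by simp
    with eslice_exists[OF assign.hyps(2)] obtain \<rho>2 e2' where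
      s2: "eslice (\<mu>' l) e2 \<rho>2 e2'" "le_env \<rho>2 \<sigma>" "le_exp e2' e2"
      by blast
    obtain \<rho>1 e1' where s1: "eslice (VLoc l) e1 \<rho>1 e1'" "le_env \<rho>1 \<sigma>" "le_exp e1' e1"
      using eslice_exists[OF assign.hyps(1), of "VLoc l"] by auto
    have "bslice (join_store \<mu> \<mu>') R' (TAssign e1 l e2) (join_env \<rho>1 \<rho>2) (join_store \<mu> (\<mu>'(l := VHole)))
        (Assign e1' e2') (TAssign e1' l e2')"
      using bslice.assign[OF False'[unfolded R'], of \<rho>2 e2' \<rho>1 e1'] s1(1) s2(1) jl st R' by simp
    then show ?thesis
      by (rule erased_join_sliceI[rotated 5])
        (use False R' s1 s2 le_store_upd_hole[OF assign.prems(3)]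
          in \<open>auto intro: bslice.assign join_env_least\<close>)
  qed (rule erased_join_box_slice[OF eval.assign[OF assign.hyps] assign.prems])
next
  case (deref \<sigma> e l \<nu>)
  show ?case
  proof (cases "box_applies \<mu>' R' (TDeref l e)")
    case False
    with box_applies_join_rightD have False': "\<not> box_applies (join_store \<mu> \<mu>') R' (TDeref l e)"
      by blast
    from deref.prems obtain u where R': "R' = Res OVal u" "le_val u (\<nu> l)"
      by auto
    then have read: "le_store (hole_store(l := u)) \<nu>"
      by (simp add: le_store_def hole_store_apply)
    obtain \<rho> e' where s: "eslice (VLoc l) e \<rho> e'" "le_env \<rho> \<sigma>" "le_exp e' e"
      using eslice_exists[OF deref.hyps(1), of "VLoc l"] by auto
    have "join_store (join_store \<mu> \<mu>') (hole_store(l := u)) =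
        join_store \<mu> (join_store \<mu>' (hole_store(l := u)))"
      by (rule join_store_assoc[OF deref.prems(1,3) read])
    with bslice.deref[OF False'[unfolded R'(1)] s(1)] have
      "bslice (join_store \<mu> \<mu>') R' (TDeref l e) \<rho> (join_store \<mu> (join_store \<mu>' (hole_store(l := u))))
        (Deref e') (TDeref l e')"
      unfolding R'(1) by simp
    then show ?thesis
      by (rule erased_join_sliceI[rotated 5])
        (use False R' s read deref.prems(3) in \<open>auto intro: bslice.deref join_store_least\<close>)
  qed (rule erased_join_box_slice[OF eval.deref[OF deref.hyps] deref.prems])
next
  case (app \<sigma> e1 v1 \<rho>' f x M e2 v2 T \<nu> \<nu>' S)
  show ?case
  proof (cases "box_applies \<mu>' R' (TApp e1 e2 f x T)")
    case False
    with box_applies_join_rightD have False': "\<not> box_applies (join_store \<mu> \<mu>') R' (TApp e1 e2 f x T)"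
      by blast
    from app.IH[OF app.prems(1) app.prems(2)[simplified] app.prems(3,4)] obtain \<rho> \<mu>0 N U where body:
      "bslice \<mu>' R' T \<rho> \<mu>0 N U" "le_env \<rho> ((\<rho>'(f := v1))(x := v2))" "le_store \<mu>0 \<nu>" "le_comp N M"
      "le_trace U T" "bslice (join_store \<mu> \<mu>') R' T \<rho> (join_store \<mu> \<mu>0) N U"
      by blast
    have "le_val (\<rho> x) v2"
      using le_env_apply[OF body(2), of x] by simp
    with eslice_exists[OF app.hyps(3)] obtain \<rho>2 e2' where
      arg: "eslice (\<rho> x) e2 \<rho>2 e2'" "le_env \<rho>2 \<sigma>" "le_exp e2' e2"
      by blast
    have "le_val (closure_slice \<rho> f x N) v1"
      using closure_slice_le body(2,4) app.hyps(2) by blast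
    with eslice_exists[OF app.hyps(1)] obtain \<rho>1 e1' where
      fn: "eslice (closure_slice \<rho> f x N) e1 \<rho>1 e1'" "le_env \<rho>1 \<sigma>" "le_exp e1' e1"
      by blast
    show ?thesis
      by (rule erased_join_sliceI[OF bslice_appI[OF False body(1) arg(1) fn(1)] _ _ _ _
            bslice_appI[OF False' body(6) arg(1) fn(1)]])
        (use body arg fn in \<open>auto intro: join_env_least\<close>)
  qed (rule erased_join_box_slice[OF eval.app[OF app.hyps] app.prems])
next
  case (letS T1 \<sigma> \<nu> M1 \<nu>1 v T2 x M2 \<nu>2 S)
  show ?case
  proof (cases "box_applies \<mu>' R' (TLetS T1 x T2)")
    case False
    with box_applies_join_rightD have False': "\<not> box_applies (join_store \<mu> \<mu>') R' (TLetS T1 x T2)"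
      by blast
    have er1: "erase \<mu> (writes T1) = \<mu>" and er2: "erase \<mu> (writes T2) = \<mu>"
      using erase_subset[OF letS.prems(2)] by auto
    from letS.IH(2)[OF letS.prems(1) er2 letS.prems(3,4)] obtain \<rho>0 \<mu>1 N2 U2 where s2:
      "bslice \<mu>' R' T2 \<rho>0 \<mu>1 N2 U2" "le_env \<rho>0 (\<sigma>(x := v))" "le_store \<mu>1 \<nu>1" "le_comp N2 M2"
      "le_trace U2 T2" "bslice (join_store \<mu> \<mu>') R' T2 \<rho>0 (join_store \<mu> \<mu>1) N2 U2"
      by blast
    have "le_res (Res OVal (\<rho>0 x)) (Res OVal v)"
      using le_env_apply[OF s2(2), of x] by simp
    with letS.IH(1)[OF erased_store_le[OF letS.hyps(2) letS.prems(1) er2] er1 s2(3)]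
    obtain \<rho>1 \<mu>2 N1 U1 where s1:
      "bslice \<mu>1 (Res OVal (\<rho>0 x)) T1 \<rho>1 \<mu>2 N1 U1" "le_env \<rho>1 \<sigma>" "le_store \<mu>2 \<nu>" "le_comp N1 M1"
      "le_trace U1 T1" "bslice (join_store \<mu> \<mu>1) (Res OVal (\<rho>0 x)) T1 \<rho>1 (join_store \<mu> \<mu>2) N1 U1"
      by blast
    show ?thesis
      by (rule erased_join_sliceI[OF bslice.lett[OF False s2(1) s1(1)] _ _ _ _
            bslice.lett[OF False' s2(6) s1(6)]])
        (use s1 s2 le_env_upd_hole[OF s2(2)] in \<open>auto intro: join_env_least\<close>)
  qed (rule erased_join_box_slice[OF eval.letS[OF letS.hyps] letS.prems])
next
  case (letF T \<sigma> \<nu> M1 \<nu>' v x M2)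
  show ?case
  proof (cases "box_applies \<mu>' R' (TLetF T)")
    case False
    with box_applies_join_rightD have False': "\<not> box_applies (join_store \<mu> \<mu>') R' (TLetF T)"
      by blast
    from letF.prems obtain u where R': "R' = Res OExn u"
      by auto
    from letF.IH[OF letF.prems(1) letF.prems(2)[simplified] letF.prems(3,4)] obtain \<rho> \<mu>0 N U where s:
      "bslice \<mu>' R' T \<rho> \<mu>0 N U" "le_env \<rho> \<sigma>" "le_store \<mu>0 \<nu>" "le_comp N M1" "le_trace U T"
      "bslice (join_store \<mu> \<mu>') R' T \<rho> (join_store \<mu> \<mu>0) N U"
      by blast
    have "bslice \<mu>' R' (TLetF T) \<rho> \<mu>0 (Let x N CHole) (TLetF U)"
      "bslice (join_store \<mu> \<mu>') R' (TLetF T) \<rho> (join_store \<mu> \<mu>0) (Let x N CHole) (TLetF U)"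
      using False False' s(1,6) unfolding R' by (blast intro: bslice.letfail)+
    then show ?thesis
      by (intro erased_join_sliceI) (use s in auto)
  qed (rule erased_join_box_slice[OF eval.letF[OF letF.hyps] letF.prems])
next
  case (tryF T1 \<sigma> \<nu> M1 \<nu>1 v T2 x M2 \<nu>2 S)
  show ?case
  proof (cases "box_applies \<mu>' R' (TTryF T1 x T2)")
    case False
    with box_applies_join_rightD have False': "\<not> box_applies (join_store \<mu> \<mu>') R' (TTryF T1 x T2)"
      by blast
    have er1: "erase \<mu> (writes T1) = \<mu>" and er2: "erase \<mu> (writes T2) = \<mu>"
      using erase_subset[OF tryF.prems(2)] by auto
    from tryF.IH(2)[OF tryF.prems(1) er2 tryF.prems(3,4)] obtain \<rho>0 \<mu>1 N2 U2 where s2: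
      "bslice \<mu>' R' T2 \<rho>0 \<mu>1 N2 U2" "le_env \<rho>0 (\<sigma>(x := v))" "le_store \<mu>1 \<nu>1" "le_comp N2 M2"
      "le_trace U2 T2" "bslice (join_store \<mu> \<mu>') R' T2 \<rho>0 (join_store \<mu> \<mu>1) N2 U2"
      by blast
    have "le_res (Res OExn (\<rho>0 x)) (Res OExn v)"
      using le_env_apply[OF s2(2), of x] by simp
    with tryF.IH(1)[OF erased_store_le[OF tryF.hyps(2) tryF.prems(1) er2] er1 s2(3)]
    obtain \<rho>1 \<mu>2 N1 U1 where s1:
      "bslice \<mu>1 (Res OExn (\<rho>0 x)) T1 \<rho>1 \<mu>2 N1 U1" "le_env \<rho>1 \<sigma>" "le_store \<mu>2 \<nu>" "le_comp N1 M1"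
      "le_trace U1 T1" "bslice (join_store \<mu> \<mu>1) (Res OExn (\<rho>0 x)) T1 \<rho>1 (join_store \<mu> \<mu>2) N1 U1"
      by blast
    show ?thesis
      by (rule erased_join_sliceI[OF bslice.tryfail[OF False s2(1) s1(1)] _ _ _ _
            bslice.tryfail[OF False' s2(6) s1(6)]])
        (use s1 s2 le_env_upd_hole[OF s2(2)] in \<open>auto intro: join_env_least\<close>)
  qed (rule erased_join_box_slice[OF eval.tryF[OF tryF.hyps] tryF.prems])
next
  case (tryS T \<sigma> \<nu> M1 \<nu>' v x M2)
  show ?case
  proof (cases "box_applies \<mu>' R' (TTryS T)")
    case False
    with box_applies_join_rightD have False': "\<not> box_applies (join_store \<mu> \<mu>') R' (TTryS T)"
      by blast
    from tryS.prems obtain u where R': "R' = Res OVal u"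
      by auto
    from tryS.IH[OF tryS.prems(1) tryS.prems(2)[simplified] tryS.prems(3,4)] obtain \<rho> \<mu>0 N U where s:
      "bslice \<mu>' R' T \<rho> \<mu>0 N U" "le_env \<rho> \<sigma>" "le_store \<mu>0 \<nu>" "le_comp N M1" "le_trace U T"
      "bslice (join_store \<mu> \<mu>') R' T \<rho> (join_store \<mu> \<mu>0) N U"
      by blast
    have "bslice \<mu>' R' (TTryS T) \<rho> \<mu>0 (Try N x CHole) (TTryS U)"
      "bslice (join_store \<mu> \<mu>') R' (TTryS T) \<rho> (join_store \<mu> \<mu>0) (Try N x CHole) (TTryS U)"
      using False False' s(1,6) unfolding R' by (blast intro: bslice.trysucc)+
    then show ?thesis
      by (intro erased_join_sliceI) (use s in auto)
  qed (rule erased_join_box_slice[OF eval.tryS[OF tryS.hyps] tryS.prems])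
next
  case (caseL \<sigma> e v T x \<nu> M1 \<nu>' S y M2)
  show ?case
  proof (cases "box_applies \<mu>' R' (TCaseL e x T y)")
    case False
    with box_applies_join_rightD have False': "\<not> box_applies (join_store \<mu> \<mu>') R' (TCaseL e x T y)"
      by blast
    from caseL.IH[OF caseL.prems(1) caseL.prems(2)[simplified] caseL.prems(3,4)] obtain \<rho>0 \<mu>0 N U where s:
      "bslice \<mu>' R' T \<rho>0 \<mu>0 N U" "le_env \<rho>0 (\<sigma>(x := v))" "le_store \<mu>0 \<nu>" "le_comp N M1" "le_trace U T"
      "bslice (join_store \<mu> \<mu>') R' T \<rho>0 (join_store \<mu> \<mu>0) N U"
      by blast
    have "le_val (VInl (\<rho>0 x)) (VInl v)"
      using le_env_apply[OF s(2), of x] by simp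
    with eslice_exists[OF caseL.hyps(1)] obtain \<rho>' e' where
      se: "eslice (VInl (\<rho>0 x)) e \<rho>' e'" "le_env \<rho>' \<sigma>" "le_exp e' e"
      by blast
    show ?thesis
      by (rule erased_join_sliceI[OF bslice.caseL[OF False s(1) se(1)] _ _ _ _
            bslice.caseL[OF False' s(6) se(1)]])
        (use s se le_env_upd_hole[OF s(2)] in \<open>auto intro: join_env_least\<close>)
  qed (rule erased_join_box_slice[OF eval.caseL[OF caseL.hyps] caseL.prems])
next
  case (caseR \<sigma> e v T y \<nu> M2 \<nu>' S x M1)
  show ?case
  proof (cases "box_applies \<mu>' R' (TCaseR e x y T)")
    case False
    with box_applies_join_rightD have False': "\<not> box_applies (join_store \<mu> \<mu>') R' (TCaseR e x y T)"
      by blast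
    from caseR.IH[OF caseR.prems(1) caseR.prems(2)[simplified] caseR.prems(3,4)] obtain \<rho>0 \<mu>0 N U where s:
      "bslice \<mu>' R' T \<rho>0 \<mu>0 N U" "le_env \<rho>0 (\<sigma>(y := v))" "le_store \<mu>0 \<nu>" "le_comp N M2" "le_trace U T"
      "bslice (join_store \<mu> \<mu>') R' T \<rho>0 (join_store \<mu> \<mu>0) N U"
      by blast
    have "le_val (VInr (\<rho>0 y)) (VInr v)"
      using le_env_apply[OF s(2), of y] by simp
    with eslice_exists[OF caseR.hyps(1)] obtain \<rho>' e' where
      se: "eslice (VInr (\<rho>0 y)) e \<rho>' e'" "le_env \<rho>' \<sigma>" "le_exp e' e"
      by blast
    show ?thesis
      by (rule erased_join_sliceI[OF bslice.caseR[OF False s(1) se(1)] _ _ _ _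
            bslice.caseR[OF False' s(6) se(1)]])
        (use s se le_env_upd_hole[OF s(2)] in \<open>auto intro: join_env_least\<close>)
  qed (rule erased_join_box_slice[OF eval.caseR[OF caseR.hyps] caseR.prems])
qed

lemma join_res_commute: "le_res R S \<Longrightarrow> le_res R' S \<Longrightarrow> join_res R R' = join_res R' R"
  by (cases R; cases R'; cases S) (auto simp: join_val_commute)

lemma joined_slicesI:
  "bslice \<mu> R T \<rho> \<mu>0 N U \<Longrightarrow> le_env \<rho> \<sigma> \<Longrightarrow> le_store \<mu>0 \<nu> \<Longrightarrow> le_comp N M \<Longrightarrow> le_trace U T \<Longrightarrow>
   bslice \<mu>' R' T \<rho>' \<mu>0' N' U' \<Longrightarrow> le_env \<rho>' \<sigma> \<Longrightarrow> le_store \<mu>0' \<nu> \<Longrightarrow> le_comp N' M \<Longrightarrow> le_trace U' T \<Longrightarrow>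
   bslice (join_store \<mu> \<mu>') (join_res R R') T (join_env \<rho> \<rho>') (join_store \<mu>0 \<mu>0') (join_comp N N')
     (join_trace U U') \<Longrightarrow>
   \<exists>\<rho> \<mu>0 N U \<rho>' \<mu>0' N' U'.
     bslice \<mu> R T \<rho> \<mu>0 N U \<and> le_env \<rho> \<sigma> \<and> le_store \<mu>0 \<nu> \<and> le_comp N M \<and> le_trace U T \<and>
     bslice \<mu>' R' T \<rho>' \<mu>0' N' U' \<and> le_env \<rho>' \<sigma> \<and> le_store \<mu>0' \<nu> \<and> le_comp N' M \<and> le_trace U' T \<and>
     bslice (join_store \<mu> \<mu>') (join_res R R') T (join_env \<rho> \<rho>') (join_store \<mu>0 \<mu>0') (join_comp N N')
       (join_trace U U')"
  by blast

lemma bslice_join_box_left: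
  assumes ev: "eval T \<sigma> \<nu> M \<nu>' S"
    and "le_store \<mu> \<nu>'" "le_res R S" "le_store \<mu>' \<nu>'" "le_res R' S"
    and box: "box_applies \<mu> R T"
  shows "\<exists>\<rho> \<mu>0 N U \<rho>' \<mu>0' N' U'.
     bslice \<mu> R T \<rho> \<mu>0 N U \<and> le_env \<rho> \<sigma> \<and> le_store \<mu>0 \<nu> \<and> le_comp N M \<and> le_trace U T \<and>
     bslice \<mu>' R' T \<rho>' \<mu>0' N' U' \<and> le_env \<rho>' \<sigma> \<and> le_store \<mu>0' \<nu> \<and> le_comp N' M \<and> le_trace U' T \<and>
     bslice (join_store \<mu> \<mu>') (join_res R R') T (join_env \<rho> \<rho>') (join_store \<mu>0 \<mu>0') (join_comp N N')
       (join_trace U U')"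
proof -
  from box have erased: "erase \<mu> (writes T) = \<mu>"
    by (simp add: box_applies_def)
  from bslice_join_erased_store[OF ev assms(2) erased assms(4,5)] obtain \<rho>' \<mu>0' N' U' where s':
    "bslice \<mu>' R' T \<rho>' \<mu>0' N' U'" "le_env \<rho>' \<sigma>" "le_store \<mu>0' \<nu>" "le_comp N' M" "le_trace U' T"
    "bslice (join_store \<mu> \<mu>') R' T \<rho>' (join_store \<mu> \<mu>0') N' U'"
    by blast
  obtain v where "S = Res (outcome T) v"
    using eval_outcome[OF ev] ..
  with assms(3,5) box have "join_res R R' = R'"
    by (auto simp: box_applies_def)
  with s'(6) have "bslice (join_store \<mu> \<mu>') (join_res R R') T (join_env hole_env \<rho>') (join_store \<mu> \<mu>0')
      (join_comp CHole N') (join_trace (THole (outcome T) (writes T)) U')"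
    by simp
  moreover note box_slice[OF ev assms(2,3) box]
  ultimately show ?thesis
    using s'(1-5) by (blast intro: joined_slicesI le_env_hole le_comp_hole le_trace_hole_self)
qed

lemma bslice_join_box:
  assumes ev: "eval T \<sigma> \<nu> M \<nu>' S"
    and bounds: "le_store \<mu> \<nu>'" "le_res R S" "le_store \<mu>' \<nu>'" "le_res R' S"
    and box: "box_applies \<mu> R T \<or> box_applies \<mu>' R' T"
  shows "\<exists>\<rho> \<mu>0 N U \<rho>' \<mu>0' N' U'.
     bslice \<mu> R T \<rho> \<mu>0 N U \<and> le_env \<rho> \<sigma> \<and> le_store \<mu>0 \<nu> \<and> le_comp N M \<and> le_trace U T \<and>
     bslice \<mu>' R' T \<rho>' \<mu>0' N' U' \<and> le_env \<rho>' \<sigma> \<and> le_store \<mu>0' \<nu> \<and> le_comp N' M \<and> le_trace U' T \<and>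
     bslice (join_store \<mu> \<mu>') (join_res R R') T (join_env \<rho> \<rho>') (join_store \<mu>0 \<mu>0') (join_comp N N')
       (join_trace U U')"
  using box
proof
  assume "box_applies \<mu> R T"
  from bslice_join_box_left[OF ev bounds this] show ?thesis .
next
  assume "box_applies \<mu>' R' T"
  from bslice_join_box_left[OF ev bounds(3,4,1,2) this] obtain \<rho>' \<mu>0' N' U' \<rho> \<mu>0 N U where
    s': "bslice \<mu>' R' T \<rho>' \<mu>0' N' U'" "le_env \<rho>' \<sigma>" "le_store \<mu>0' \<nu>" "le_comp N' M" "le_trace U' T" and
    s: "bslice \<mu> R T \<rho> \<mu>0 N U" "le_env \<rho> \<sigma>" "le_store \<mu>0 \<nu>" "le_comp N M" "le_trace U T" and
    j: "bslice (join_store \<mu>' \<mu>) (join_res R' R) T (join_env \<rho>' \<rho>) (join_store \<mu>0' \<mu>0) (join_comp N' N)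
      (join_trace U' U)"
    by blast
  have "join_store \<mu>' \<mu> = join_store \<mu> \<mu>'" "join_res R' R = join_res R R'" "join_env \<rho>' \<rho> = join_env \<rho> \<rho>'"
    "join_store \<mu>0' \<mu>0 = join_store \<mu>0 \<mu>0'" "join_comp N' N = join_comp N N'"
    "join_trace U' U = join_trace U U'"
    using bounds s s' by (metis join_store_commute join_res_commute join_env_commute join_comp_commute
        join_trace_commute)+
  with j have "bslice (join_store \<mu> \<mu>') (join_res R R') T (join_env \<rho> \<rho>') (join_store \<mu>0 \<mu>0')
      (join_comp N N') (join_trace U U')"
    by simp
  with s s' show ?thesis
    by (intro joined_slicesI)
qed

lemma bslice_join:
  "eval T \<sigma> \<nu> M \<nu>' S \<Longrightarrow> le_store \<mu> \<nu>' \<Longrightarrow> le_res R S \<Longrightarrow> le_store \<mu>' \<nu>' \<Longrightarrow> le_res R' S \<Longrightarrow>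
   \<exists>\<rho> \<mu>0 N U \<rho>' \<mu>0' N' U'.
     bslice \<mu> R T \<rho> \<mu>0 N U \<and> le_env \<rho> \<sigma> \<and> le_store \<mu>0 \<nu> \<and> le_comp N M \<and> le_trace U T \<and>
     bslice \<mu>' R' T \<rho>' \<mu>0' N' U' \<and> le_env \<rho>' \<sigma> \<and> le_store \<mu>0' \<nu> \<and> le_comp N' M \<and> le_trace U' T \<and>
     bslice (join_store \<mu> \<mu>') (join_res R R') T (join_env \<rho> \<rho>') (join_store \<mu>0 \<mu>0') (join_comp N N')
       (join_trace U U')"
proof (induction arbitrary: \<mu> R \<mu>' R' rule: eval.induct)
  case (ret \<sigma> e v \<nu>)
  show ?case
  proof (cases "box_applies \<mu> R (TReturn e) \<or> box_applies \<mu>' R' (TReturn e)")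
    case False
    then have nb: "\<not> box_applies \<mu> R (TReturn e)" "\<not> box_applies \<mu>' R' (TReturn e)"
      by auto
    from not_box_applies_join[OF nb(1)]
    have nbj: "\<not> box_applies (join_store \<mu> \<mu>') (join_res R R') (TReturn e)" .
    from ret.prems obtain u u' where R: "R = Res OVal u" "le_val u v"
      and R': "R' = Res OVal u'" "le_val u' v"
      by auto
    obtain \<rho> a \<rho>' a' where
      s: "eslice u e \<rho> a" "le_env \<rho> \<sigma>" "le_exp a e" and s': "eslice u' e \<rho>' a'" "le_env \<rho>' \<sigma>" "le_exp a' e"
      using eslice_exists[OF ret.hyps R(2)] eslice_exists[OF ret.hyps R'(2)] by blast
    have B: "bslice \<mu> R (TReturn e) \<rho> \<mu> (Return a) (TReturn a)"
      "bslice \<mu>' R' (TReturn e) \<rho>' \<mu>' (Return a') (TReturn a')"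
      "bslice (join_store \<mu> \<mu>') (join_res R R') (TReturn e) (join_env \<rho> \<rho>') (join_store \<mu> \<mu>')
        (join_comp (Return a) (Return a')) (join_trace (TReturn a) (TReturn a'))"
      using nb nbj s(1) s'(1) eslice_join[OF ret.hyps R(2) R'(2) s(1) s'(1)]
      unfolding R R' by (simp_all add: bslice.ret)
    show ?thesis
      by (rule joined_slicesI[OF B(1) _ _ _ _ B(2) _ _ _ _ B(3)]) (use s s' ret.prems in auto)
  qed (rule bslice_join_box[OF eval.ret[OF ret.hyps] ret.prems])
next
  case (raise \<sigma> e v \<nu>)
  show ?case
  proof (cases "box_applies \<mu> R (TRaise e) \<or> box_applies \<mu>' R' (TRaise e)")
    case False
    then have nb: "\<not> box_applies \<mu> R (TRaise e)" "\<not> box_applies \<mu>' R' (TRaise e)"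
      by auto
    from not_box_applies_join[OF nb(1)]
    have nbj: "\<not> box_applies (join_store \<mu> \<mu>') (join_res R R') (TRaise e)" .
    from raise.prems obtain u u' where R: "R = Res OExn u" "le_val u v"
      and R': "R' = Res OExn u'" "le_val u' v"
      by auto
    obtain \<rho> a \<rho>' a' where
      s: "eslice u e \<rho> a" "le_env \<rho> \<sigma>" "le_exp a e" and s': "eslice u' e \<rho>' a'" "le_env \<rho>' \<sigma>" "le_exp a' e"
      using eslice_exists[OF raise.hyps R(2)] eslice_exists[OF raise.hyps R'(2)] by blast
    have B: "bslice \<mu> R (TRaise e) \<rho> \<mu> (Raise a) (TRaise a)"
      "bslice \<mu>' R' (TRaise e) \<rho>' \<mu>' (Raise a') (TRaise a')"
      "bslice (join_store \<mu> \<mu>') (join_res R R') (TRaise e) (join_env \<rho> \<rho>') (join_store \<mu> \<mu>')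
        (join_comp (Raise a) (Raise a')) (join_trace (TRaise a) (TRaise a'))"
      using nb nbj s(1) s'(1) eslice_join[OF raise.hyps R(2) R'(2) s(1) s'(1)]
      unfolding R R' by (simp_all add: bslice.raise)
    show ?thesis
      by (rule joined_slicesI[OF B(1) _ _ _ _ B(2) _ _ _ _ B(3)]) (use s s' raise.prems in auto)
  qed (rule bslice_join_box[OF eval.raise[OF raise.hyps] raise.prems])
next
  case (ref \<sigma> e v l \<nu>)
  show ?case
  proof (cases "box_applies \<mu> R (TRef l e) \<or> box_applies \<mu>' R' (TRef l e)")
    case False
    then have nb: "\<not> box_applies \<mu> R (TRef l e)" "\<not> box_applies \<mu>' R' (TRef l e)"
      by auto
    from not_box_applies_join[OF nb(1)]
    have nbj: "\<not> box_applies (join_store \<mu> \<mu>') (join_res R R') (TRef l e)" .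
    from ref.prems obtain u u' where R: "R = Res OVal u" and R': "R' = Res OVal u'"
      by auto
    have l: "le_val (\<mu> l) v" "le_val (\<mu>' l) v"
      using le_store_apply[OF ref.prems(1), of l] le_store_apply[OF ref.prems(3), of l] by simp_all
    obtain \<rho> a \<rho>' a' where s: "eslice (\<mu> l) e \<rho> a" "le_env \<rho> \<sigma>" "le_exp a e"
      and s': "eslice (\<mu>' l) e \<rho>' a'" "le_env \<rho>' \<sigma>" "le_exp a' e"
      using eslice_exists[OF ref.hyps(1) l(1)] eslice_exists[OF ref.hyps(1) l(2)] by blast
    have B: "bslice \<mu> R (TRef l e) \<rho> (\<mu>(l := VHole)) (Ref a) (TRef l a)"
      "bslice \<mu>' R' (TRef l e) \<rho>' (\<mu>'(l := VHole)) (Ref a') (TRef l a')"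
      "bslice (join_store \<mu> \<mu>') (join_res R R') (TRef l e) (join_env \<rho> \<rho>')
        (join_store (\<mu>(l := VHole)) (\<mu>'(l := VHole))) (join_comp (Ref a) (Ref a'))
        (join_trace (TRef l a) (TRef l a'))"
      using nb nbj s(1) s'(1) eslice_join[OF ref.hyps(1) l s(1) s'(1)]
      unfolding R R' by (simp_all add: bslice.ref join_store_upd join_store_apply)
    show ?thesis
      by (rule joined_slicesI[OF B(1) _ _ _ _ B(2) _ _ _ _ B(3)])
        (use s s' le_store_upd_hole[OF ref.prems(1)] le_store_upd_hole[OF ref.prems(3)] in auto)
  qed (rule bslice_join_box[OF eval.ref[OF ref.hyps] ref.prems])
next
  case (assign \<sigma> e1 l e2 v \<nu>)
  show ?case
  proof (cases "box_applies \<mu> R (TAssign e1 l e2) \<or> box_applies \<mu>' R' (TAssign e1 l e2)")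
    case False
    then have nb: "\<not> box_applies \<mu> R (TAssign e1 l e2)" "\<not> box_applies \<mu>' R' (TAssign e1 l e2)"
      by auto
    from not_box_applies_join[OF nb(1)]
    have nbj: "\<not> box_applies (join_store \<mu> \<mu>') (join_res R R') (TAssign e1 l e2)" .
    from assign.prems obtain u u' where R: "R = Res OVal u" and R': "R' = Res OVal u'"
      by auto
    have l: "le_val (\<mu> l) v" "le_val (\<mu>' l) v"
      using le_store_apply[OF assign.prems(1), of l] le_store_apply[OF assign.prems(3), of l] by simp_all
    have loc: "le_val (VLoc l) (VLoc l)"
      by simp
    obtain \<rho>2 a2 \<rho>2' a2' where s2: "eslice (\<mu> l) e2 \<rho>2 a2" "le_env \<rho>2 \<sigma>" "le_exp a2 e2"
      and s2': "eslice (\<mu>' l) e2 \<rho>2' a2'" "le_env \<rho>2' \<sigma>" "le_exp a2' e2"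
      using eslice_exists[OF assign.hyps(2) l(1)] eslice_exists[OF assign.hyps(2) l(2)] by blast
    obtain \<rho>1 a1 \<rho>1' a1' where s1: "eslice (VLoc l) e1 \<rho>1 a1" "le_env \<rho>1 \<sigma>" "le_exp a1 e1"
      and s1': "eslice (VLoc l) e1 \<rho>1' a1'" "le_env \<rho>1' \<sigma>" "le_exp a1' e1"
      using eslice_exists[OF assign.hyps(1) loc] by blast
    have "join_env (join_env \<rho>1 \<rho>2) (join_env \<rho>1' \<rho>2') = join_env (join_env \<rho>1 \<rho>1') (join_env \<rho>2 \<rho>2')"
      by (rule join_env_interchange[OF s1(2) s2(2) s1'(2) s2'(2)])
    then have B:
      "bslice \<mu> R (TAssign e1 l e2) (join_env \<rho>1 \<rho>2) (\<mu>(l := VHole)) (Assign a1 a2) (TAssign a1 l a2)"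
      "bslice \<mu>' R' (TAssign e1 l e2) (join_env \<rho>1' \<rho>2') (\<mu>'(l := VHole)) (Assign a1' a2')
        (TAssign a1' l a2')"
      "bslice (join_store \<mu> \<mu>') (join_res R R') (TAssign e1 l e2)
        (join_env (join_env \<rho>1 \<rho>2) (join_env \<rho>1' \<rho>2'))
        (join_store (\<mu>(l := VHole)) (\<mu>'(l := VHole))) (join_comp (Assign a1 a2) (Assign a1' a2'))
        (join_trace (TAssign a1 l a2) (TAssign a1' l a2'))"
      using nb nbj s1(1) s2(1) s1'(1) s2'(1) eslice_join[OF assign.hyps(2) l s2(1) s2'(1)]
        eslice_join[OF assign.hyps(1) loc loc s1(1) s1'(1)]
      unfolding R R' by (simp_all add: bslice.assign join_store_upd join_store_apply)
    show ?thesis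
      by (rule joined_slicesI[OF B(1) _ _ _ _ B(2) _ _ _ _ B(3)])
        (use s1 s2 s1' s2' le_store_upd_hole[OF assign.prems(1)] le_store_upd_hole[OF assign.prems(3)]
          in \<open>auto intro: join_env_least\<close>)
  qed (rule bslice_join_box[OF eval.assign[OF assign.hyps] assign.prems])
next
  case (deref \<sigma> e l \<nu>)
  show ?case
  proof (cases "box_applies \<mu> R (TDeref l e) \<or> box_applies \<mu>' R' (TDeref l e)")
    case False
    then have nb: "\<not> box_applies \<mu> R (TDeref l e)" "\<not> box_applies \<mu>' R' (TDeref l e)"
      by auto
    from not_box_applies_join[OF nb(1)]
    have nbj: "\<not> box_applies (join_store \<mu> \<mu>') (join_res R R') (TDeref l e)" .
    from deref.prems obtain u u' where R: "R = Res OVal u" "le_val u (\<nu> l)"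
      and R': "R' = Res OVal u'" "le_val u' (\<nu> l)"
      by auto
    then have read: "le_store (hole_store(l := u)) \<nu>" "le_store (hole_store(l := u')) \<nu>"
      by (simp_all add: le_store_def hole_store_apply)
    have loc: "le_val (VLoc l) (VLoc l)"
      by simp
    obtain \<rho> a \<rho>' a' where s: "eslice (VLoc l) e \<rho> a" "le_env \<rho> \<sigma>" "le_exp a e"
      and s': "eslice (VLoc l) e \<rho>' a'" "le_env \<rho>' \<sigma>" "le_exp a' e"
      using eslice_exists[OF deref.hyps(1) loc] by blast
    have "join_store (join_store \<mu> (hole_store(l := u))) (join_store \<mu>' (hole_store(l := u'))) =
        join_store (join_store \<mu> \<mu>') (hole_store(l := join_val u u'))"
      using join_store_interchange[OF deref.prems(1) read(1) deref.prems(3) read(2)]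
      by (simp add: join_store_upd)
    then have B: "bslice \<mu> R (TDeref l e) \<rho> (join_store \<mu> (hole_store(l := u))) (Deref a) (TDeref l a)"
      "bslice \<mu>' R' (TDeref l e) \<rho>' (join_store \<mu>' (hole_store(l := u'))) (Deref a') (TDeref l a')"
      "bslice (join_store \<mu> \<mu>') (join_res R R') (TDeref l e) (join_env \<rho> \<rho>')
        (join_store (join_store \<mu> (hole_store(l := u))) (join_store \<mu>' (hole_store(l := u'))))
        (join_comp (Deref a) (Deref a')) (join_trace (TDeref l a) (TDeref l a'))"
      using nb nbj s(1) s'(1) eslice_join[OF deref.hyps(1) loc loc s(1) s'(1)]
      unfolding R R' by (simp_all add: bslice.deref)
    show ?thesis
      by (rule joined_slicesI[OF B(1) _ _ _ _ B(2) _ _ _ _ B(3)])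
        (use s s' read deref.prems(1,3) in \<open>auto intro: join_store_least\<close>)
  qed (rule bslice_join_box[OF eval.deref[OF deref.hyps] deref.prems])
next
  case (app \<sigma> e1 v1 \<rho>' f x M e2 v2 T \<nu> \<nu>' S)
  show ?case
  proof (cases "box_applies \<mu> R (TApp e1 e2 f x T) \<or> box_applies \<mu>' R' (TApp e1 e2 f x T)")
    case False
    then have nb: "\<not> box_applies \<mu> R (TApp e1 e2 f x T)" "\<not> box_applies \<mu>' R' (TApp e1 e2 f x T)"
      by auto
    from not_box_applies_join[OF nb(1)]
    have nbj: "\<not> box_applies (join_store \<mu> \<mu>') (join_res R R') (TApp e1 e2 f x T)" .
    from app.IH[OF app.prems] obtain \<rho>0 \<mu>0 N U \<rho>0' \<mu>0' N' U' where body: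
      "bslice \<mu> R T \<rho>0 \<mu>0 N U" "le_env \<rho>0 ((\<rho>'(f := v1))(x := v2))" "le_store \<mu>0 \<nu>" "le_comp N M"
      "le_trace U T" "bslice \<mu>' R' T \<rho>0' \<mu>0' N' U'" "le_env \<rho>0' ((\<rho>'(f := v1))(x := v2))"
      "le_store \<mu>0' \<nu>" "le_comp N' M" "le_trace U' T"
      "bslice (join_store \<mu> \<mu>') (join_res R R') T (join_env \<rho>0 \<rho>0') (join_store \<mu>0 \<mu>0') (join_comp N N')
        (join_trace U U')"
      by blast
    have x: "le_val (\<rho>0 x) v2" "le_val (\<rho>0' x) v2"
      using le_env_apply[OF body(2), of x] le_env_apply[OF body(7), of x] by simp_all
    obtain \<rho>2 a2 \<rho>2' a2' where arg: "eslice (\<rho>0 x) e2 \<rho>2 a2" "le_env \<rho>2 \<sigma>" "le_exp a2 e2"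
      and arg': "eslice (\<rho>0' x) e2 \<rho>2' a2'" "le_env \<rho>2' \<sigma>" "le_exp a2' e2"
      using eslice_exists[OF app.hyps(3) x(1)] eslice_exists[OF app.hyps(3) x(2)] by blast
    have argj: "eslice (join_env \<rho>0 \<rho>0' x) e2 (join_env \<rho>2 \<rho>2') (join_exp a2 a2')"
      using eslice_join[OF app.hyps(3) x arg(1) arg'(1)] by (simp add: join_env_apply)
    have c: "le_val (closure_slice \<rho>0 f x N) v1" "le_val (closure_slice \<rho>0' f x N') v1"
      using closure_slice_le body(2,4,7,9) app.hyps(2) by blast+
    obtain \<rho>1 a1 \<rho>1' a1' where fn: "eslice (closure_slice \<rho>0 f x N) e1 \<rho>1 a1" "le_env \<rho>1 \<sigma>" "le_exp a1 e1"
      and fn': "eslice (closure_slice \<rho>0' f x N') e1 \<rho>1' a1'" "le_env \<rho>1' \<sigma>" "le_exp a1' e1"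
      using eslice_exists[OF app.hyps(1) c(1)] eslice_exists[OF app.hyps(1) c(2)] by blast
    have "join_val (closure_slice \<rho>0 f x N) (closure_slice \<rho>0' f x N') =
        closure_slice (join_env \<rho>0 \<rho>0') f x (join_comp N N')"
      using closure_slice_join body(2,4,7,9) app.hyps(2) by blast
    with eslice_join[OF app.hyps(1) c fn(1) fn'(1)]
    have fnj: "eslice (closure_slice (join_env \<rho>0 \<rho>0') f x (join_comp N N')) e1
        (join_env \<rho>1 \<rho>1') (join_exp a1 a1')"
      by simp
    have "join_env (join_env \<rho>1 \<rho>2) (join_env \<rho>1' \<rho>2') = join_env (join_env \<rho>1 \<rho>1') (join_env \<rho>2 \<rho>2')"
      by (rule join_env_interchange[OF fn(2) arg(2) fn'(2) arg'(2)])
    with bslice_appI[OF nbj body(11) argj fnj] have joined: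
      "bslice (join_store \<mu> \<mu>') (join_res R R') (TApp e1 e2 f x T)
        (join_env (join_env \<rho>1 \<rho>2) (join_env \<rho>1' \<rho>2')) (join_store \<mu>0 \<mu>0')
        (join_comp (App a1 a2) (App a1' a2')) (join_trace (TApp a1 a2 f x U) (TApp a1' a2' f x U'))"
      by simp
    show ?thesis
      by (rule joined_slicesI[OF bslice_appI[OF nb(1) body(1) arg(1) fn(1)] _ _ _ _
            bslice_appI[OF nb(2) body(6) arg'(1) fn'(1)] _ _ _ _ joined])
        (use body arg arg' fn fn' in \<open>auto intro: join_env_least\<close>)
  qed (rule bslice_join_box[OF eval.app[OF app.hyps] app.prems])
next
  case (letS T1 \<sigma> \<nu> M1 \<nu>1 v T2 x M2 \<nu>2 S)
  show ?case
  proof (cases "box_applies \<mu> R (TLetS T1 x T2) \<or> box_applies \<mu>' R' (TLetS T1 x T2)")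
    case False
    then have nb: "\<not> box_applies \<mu> R (TLetS T1 x T2)" "\<not> box_applies \<mu>' R' (TLetS T1 x T2)"
      by auto
    from not_box_applies_join[OF nb(1)]
    have nbj: "\<not> box_applies (join_store \<mu> \<mu>') (join_res R R') (TLetS T1 x T2)" .
    from letS.IH(2)[OF letS.prems] obtain \<rho>0 \<mu>1 N2 U2 \<rho>0' \<mu>1' N2' U2' where s2:
      "bslice \<mu> R T2 \<rho>0 \<mu>1 N2 U2" "le_env \<rho>0 (\<sigma>(x := v))" "le_store \<mu>1 \<nu>1" "le_comp N2 M2" "le_trace U2 T2"
      "bslice \<mu>' R' T2 \<rho>0' \<mu>1' N2' U2'" "le_env \<rho>0' (\<sigma>(x := v))" "le_store \<mu>1' \<nu>1" "le_comp N2' M2"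
      "le_trace U2' T2"
      "bslice (join_store \<mu> \<mu>') (join_res R R') T2 (join_env \<rho>0 \<rho>0') (join_store \<mu>1 \<mu>1') (join_comp N2 N2')
        (join_trace U2 U2')"
      by blast
    have "le_res (Res OVal (\<rho>0 x)) (Res OVal v)" "le_res (Res OVal (\<rho>0' x)) (Res OVal v)"
      using le_env_apply[OF s2(2), of x] le_env_apply[OF s2(7), of x] by simp_all
    from letS.IH(1)[OF s2(3) this(1) s2(8) this(2)] obtain \<rho>1 \<mu>2 N1 U1 \<rho>1' \<mu>2' N1' U1' where s1:
      "bslice \<mu>1 (Res OVal (\<rho>0 x)) T1 \<rho>1 \<mu>2 N1 U1" "le_env \<rho>1 \<sigma>" "le_store \<mu>2 \<nu>" "le_comp N1 M1"
      "le_trace U1 T1" "bslice \<mu>1' (Res OVal (\<rho>0' x)) T1 \<rho>1' \<mu>2' N1' U1'" "le_env \<rho>1' \<sigma>" "le_store \<mu>2' \<nu>"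
      "le_comp N1' M1" "le_trace U1' T1"
      "bslice (join_store \<mu>1 \<mu>1') (join_res (Res OVal (\<rho>0 x)) (Res OVal (\<rho>0' x))) T1 (join_env \<rho>1 \<rho>1')
        (join_store \<mu>2 \<mu>2') (join_comp N1 N1') (join_trace U1 U1')"
      by blast
    have bound: "le_env (\<rho>0(x := VHole)) \<sigma>" "le_env (\<rho>0'(x := VHole)) \<sigma>"
      using le_env_upd_hole s2(2,7) by blast+
    have "join_env (join_env \<rho>1 (\<rho>0(x := VHole))) (join_env \<rho>1' (\<rho>0'(x := VHole))) =
        join_env (join_env \<rho>1 \<rho>1') ((join_env \<rho>0 \<rho>0')(x := VHole))"
      using join_env_interchange[OF s1(2) bound(1) s1(7) bound(2)] by (simp add: join_env_upd)
    with bslice.lett[OF nbj s2(11) s1(11)[simplified, folded join_env_apply]] have joined: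
      "bslice (join_store \<mu> \<mu>') (join_res R R') (TLetS T1 x T2)
        (join_env (join_env \<rho>1 (\<rho>0(x := VHole))) (join_env \<rho>1' (\<rho>0'(x := VHole)))) (join_store \<mu>2 \<mu>2')
        (join_comp (Let x N1 N2) (Let x N1' N2')) (join_trace (TLetS U1 x U2) (TLetS U1' x U2'))"
      by simp
    show ?thesis
      by (rule joined_slicesI[OF bslice.lett[OF nb(1) s2(1) s1(1)] _ _ _ _
            bslice.lett[OF nb(2) s2(6) s1(6)] _ _ _ _ joined])
        (use s1 s2 bound in \<open>auto intro: join_env_least\<close>)
  qed (rule bslice_join_box[OF eval.letS[OF letS.hyps] letS.prems])
next
  case (letF T \<sigma> \<nu> M1 \<nu>' v x M2)
  show ?case
  proof (cases "box_applies \<mu> R (TLetF T) \<or> box_applies \<mu>' R' (TLetF T)")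
    case False
    then have nb: "\<not> box_applies \<mu> R (TLetF T)" "\<not> box_applies \<mu>' R' (TLetF T)"
      by auto
    from not_box_applies_join[OF nb(1)]
    have nbj: "\<not> box_applies (join_store \<mu> \<mu>') (join_res R R') (TLetF T)" .
    from letF.prems obtain u u' where R: "R = Res OExn u" and R': "R' = Res OExn u'"
      by auto
    from letF.IH[OF letF.prems] obtain \<rho> \<mu>0 N U \<rho>' \<mu>0' N' U' where s:
      "bslice \<mu> R T \<rho> \<mu>0 N U" "le_env \<rho> \<sigma>" "le_store \<mu>0 \<nu>" "le_comp N M1" "le_trace U T"
      "bslice \<mu>' R' T \<rho>' \<mu>0' N' U'" "le_env \<rho>' \<sigma>" "le_store \<mu>0' \<nu>" "le_comp N' M1" "le_trace U' T"
      "bslice (join_store \<mu> \<mu>') (join_res R R') T (join_env \<rho> \<rho>') (join_store \<mu>0 \<mu>0') (join_comp N N')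
        (join_trace U U')"
      by blast
    have B: "bslice \<mu> R (TLetF T) \<rho> \<mu>0 (Let x N CHole) (TLetF U)"
      "bslice \<mu>' R' (TLetF T) \<rho>' \<mu>0' (Let x N' CHole) (TLetF U')"
      "bslice (join_store \<mu> \<mu>') (join_res R R') (TLetF T) (join_env \<rho> \<rho>') (join_store \<mu>0 \<mu>0')
        (join_comp (Let x N CHole) (Let x N' CHole)) (join_trace (TLetF U) (TLetF U'))"
      using nb nbj s(1,6,11) unfolding R R' by (simp_all add: bslice.letfail)
    show ?thesis
      by (rule joined_slicesI[OF B(1) _ _ _ _ B(2) _ _ _ _ B(3)]) (use s in auto)
  qed (rule bslice_join_box[OF eval.letF[OF letF.hyps] letF.prems])
next
  case (tryF T1 \<sigma> \<nu> M1 \<nu>1 v T2 x M2 \<nu>2 S)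
  show ?case
  proof (cases "box_applies \<mu> R (TTryF T1 x T2) \<or> box_applies \<mu>' R' (TTryF T1 x T2)")
    case False
    then have nb: "\<not> box_applies \<mu> R (TTryF T1 x T2)" "\<not> box_applies \<mu>' R' (TTryF T1 x T2)"
      by auto
    from not_box_applies_join[OF nb(1)]
    have nbj: "\<not> box_applies (join_store \<mu> \<mu>') (join_res R R') (TTryF T1 x T2)" .
    from tryF.IH(2)[OF tryF.prems] obtain \<rho>0 \<mu>1 N2 U2 \<rho>0' \<mu>1' N2' U2' where s2:
      "bslice \<mu> R T2 \<rho>0 \<mu>1 N2 U2" "le_env \<rho>0 (\<sigma>(x := v))" "le_store \<mu>1 \<nu>1" "le_comp N2 M2" "le_trace U2 T2"
      "bslice \<mu>' R' T2 \<rho>0' \<mu>1' N2' U2'" "le_env \<rho>0' (\<sigma>(x := v))" "le_store \<mu>1' \<nu>1" "le_comp N2' M2"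
      "le_trace U2' T2"
      "bslice (join_store \<mu> \<mu>') (join_res R R') T2 (join_env \<rho>0 \<rho>0') (join_store \<mu>1 \<mu>1') (join_comp N2 N2')
        (join_trace U2 U2')"
      by blast
    have "le_res (Res OExn (\<rho>0 x)) (Res OExn v)" "le_res (Res OExn (\<rho>0' x)) (Res OExn v)"
      using le_env_apply[OF s2(2), of x] le_env_apply[OF s2(7), of x] by simp_all
    from tryF.IH(1)[OF s2(3) this(1) s2(8) this(2)] obtain \<rho>1 \<mu>2 N1 U1 \<rho>1' \<mu>2' N1' U1' where s1:
      "bslice \<mu>1 (Res OExn (\<rho>0 x)) T1 \<rho>1 \<mu>2 N1 U1" "le_env \<rho>1 \<sigma>" "le_store \<mu>2 \<nu>" "le_comp N1 M1"
      "le_trace U1 T1" "bslice \<mu>1' (Res OExn (\<rho>0' x)) T1 \<rho>1' \<mu>2' N1' U1'" "le_env \<rho>1' \<sigma>" "le_store \<mu>2' \<nu>"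
      "le_comp N1' M1" "le_trace U1' T1"
      "bslice (join_store \<mu>1 \<mu>1') (join_res (Res OExn (\<rho>0 x)) (Res OExn (\<rho>0' x))) T1 (join_env \<rho>1 \<rho>1')
        (join_store \<mu>2 \<mu>2') (join_comp N1 N1') (join_trace U1 U1')"
      by blast
    have bound: "le_env (\<rho>0(x := VHole)) \<sigma>" "le_env (\<rho>0'(x := VHole)) \<sigma>"
      using le_env_upd_hole s2(2,7) by blast+
    have "join_env (join_env (\<rho>0(x := VHole)) \<rho>1) (join_env (\<rho>0'(x := VHole)) \<rho>1') =
        join_env ((join_env \<rho>0 \<rho>0')(x := VHole)) (join_env \<rho>1 \<rho>1')"
      using join_env_interchange[OF bound(1) s1(2) bound(2) s1(7)] by (simp add: join_env_upd)
    with bslice.tryfail[OF nbj s2(11) s1(11)[simplified, folded join_env_apply]] have joined: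
      "bslice (join_store \<mu> \<mu>') (join_res R R') (TTryF T1 x T2)
        (join_env (join_env (\<rho>0(x := VHole)) \<rho>1) (join_env (\<rho>0'(x := VHole)) \<rho>1')) (join_store \<mu>2 \<mu>2')
        (join_comp (Try N1 x N2) (Try N1' x N2')) (join_trace (TTryF U1 x U2) (TTryF U1' x U2'))"
      by simp
    show ?thesis
      by (rule joined_slicesI[OF bslice.tryfail[OF nb(1) s2(1) s1(1)] _ _ _ _
            bslice.tryfail[OF nb(2) s2(6) s1(6)] _ _ _ _ joined])
        (use s1 s2 bound in \<open>auto intro: join_env_least\<close>)
  qed (rule bslice_join_box[OF eval.tryF[OF tryF.hyps] tryF.prems])
next
  case (tryS T \<sigma> \<nu> M1 \<nu>' v x M2)
  show ?case
  proof (cases "box_applies \<mu> R (TTryS T) \<or> box_applies \<mu>' R' (TTryS T)")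
    case False
    then have nb: "\<not> box_applies \<mu> R (TTryS T)" "\<not> box_applies \<mu>' R' (TTryS T)"
      by auto
    from not_box_applies_join[OF nb(1)]
    have nbj: "\<not> box_applies (join_store \<mu> \<mu>') (join_res R R') (TTryS T)" .
    from tryS.prems obtain u u' where R: "R = Res OVal u" and R': "R' = Res OVal u'"
      by auto
    from tryS.IH[OF tryS.prems] obtain \<rho> \<mu>0 N U \<rho>' \<mu>0' N' U' where s:
      "bslice \<mu> R T \<rho> \<mu>0 N U" "le_env \<rho> \<sigma>" "le_store \<mu>0 \<nu>" "le_comp N M1" "le_trace U T"
      "bslice \<mu>' R' T \<rho>' \<mu>0' N' U'" "le_env \<rho>' \<sigma>" "le_store \<mu>0' \<nu>" "le_comp N' M1" "le_trace U' T"
      "bslice (join_store \<mu> \<mu>') (join_res R R') T (join_env \<rho> \<rho>') (join_store \<mu>0 \<mu>0') (join_comp N N')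
        (join_trace U U')"
      by blast
    have B: "bslice \<mu> R (TTryS T) \<rho> \<mu>0 (Try N x CHole) (TTryS U)"
      "bslice \<mu>' R' (TTryS T) \<rho>' \<mu>0' (Try N' x CHole) (TTryS U')"
      "bslice (join_store \<mu> \<mu>') (join_res R R') (TTryS T) (join_env \<rho> \<rho>') (join_store \<mu>0 \<mu>0')
        (join_comp (Try N x CHole) (Try N' x CHole)) (join_trace (TTryS U) (TTryS U'))"
      using nb nbj s(1,6,11) unfolding R R' by (simp_all add: bslice.trysucc)
    show ?thesis
      by (rule joined_slicesI[OF B(1) _ _ _ _ B(2) _ _ _ _ B(3)]) (use s in auto)
  qed (rule bslice_join_box[OF eval.tryS[OF tryS.hyps] tryS.prems])
next
  case (caseL \<sigma> e v T x \<nu> M1 \<nu>' S y M2)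
  show ?case
  proof (cases "box_applies \<mu> R (TCaseL e x T y) \<or> box_applies \<mu>' R' (TCaseL e x T y)")
    case False
    then have nb: "\<not> box_applies \<mu> R (TCaseL e x T y)" "\<not> box_applies \<mu>' R' (TCaseL e x T y)"
      by auto
    from not_box_applies_join[OF nb(1)]
    have nbj: "\<not> box_applies (join_store \<mu> \<mu>') (join_res R R') (TCaseL e x T y)" .
    from caseL.IH[OF caseL.prems] obtain \<rho>0 \<mu>0 N U \<rho>0' \<mu>0' N' U' where s:
      "bslice \<mu> R T \<rho>0 \<mu>0 N U" "le_env \<rho>0 (\<sigma>(x := v))" "le_store \<mu>0 \<nu>" "le_comp N M1" "le_trace U T"
      "bslice \<mu>' R' T \<rho>0' \<mu>0' N' U'" "le_env \<rho>0' (\<sigma>(x := v))" "le_store \<mu>0' \<nu>" "le_comp N' M1"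
      "le_trace U' T"
      "bslice (join_store \<mu> \<mu>') (join_res R R') T (join_env \<rho>0 \<rho>0') (join_store \<mu>0 \<mu>0') (join_comp N N')
        (join_trace U U')"
      by blast
    have inl: "le_val (VInl (\<rho>0 x)) (VInl v)" "le_val (VInl (\<rho>0' x)) (VInl v)"
      using le_env_apply[OF s(2), of x] le_env_apply[OF s(7), of x] by simp_all
    obtain \<rho>e a \<rho>e' a' where se: "eslice (VInl (\<rho>0 x)) e \<rho>e a" "le_env \<rho>e \<sigma>" "le_exp a e"
      and se': "eslice (VInl (\<rho>0' x)) e \<rho>e' a'" "le_env \<rho>e' \<sigma>" "le_exp a' e"
      using eslice_exists[OF caseL.hyps(1) inl(1)] eslice_exists[OF caseL.hyps(1) inl(2)] by blast
    have sej: "eslice (VInl (join_env \<rho>0 \<rho>0' x)) e (join_env \<rho>e \<rho>e') (join_exp a a')"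
      using eslice_join[OF caseL.hyps(1) inl se(1) se'(1)] by (simp add: join_env_apply)
    have bound: "le_env (\<rho>0(x := VHole)) \<sigma>" "le_env (\<rho>0'(x := VHole)) \<sigma>"
      using le_env_upd_hole s(2,7) by blast+
    have "join_env (join_env (\<rho>0(x := VHole)) \<rho>e) (join_env (\<rho>0'(x := VHole)) \<rho>e') =
        join_env ((join_env \<rho>0 \<rho>0')(x := VHole)) (join_env \<rho>e \<rho>e')"
      using join_env_interchange[OF bound(1) se(2) bound(2) se'(2)] by (simp add: join_env_upd)
    with bslice.caseL[OF nbj s(11) sej] have joined:
      "bslice (join_store \<mu> \<mu>') (join_res R R') (TCaseL e x T y)
        (join_env (join_env (\<rho>0(x := VHole)) \<rho>e) (join_env (\<rho>0'(x := VHole)) \<rho>e')) (join_store \<mu>0 \<mu>0')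
        (join_comp (Case a x N y CHole) (Case a' x N' y CHole))
        (join_trace (TCaseL a x U y) (TCaseL a' x U' y))"
      by simp
    show ?thesis
      by (rule joined_slicesI[OF bslice.caseL[OF nb(1) s(1) se(1)] _ _ _ _
            bslice.caseL[OF nb(2) s(6) se'(1)] _ _ _ _ joined])
        (use s se se' bound in \<open>auto intro: join_env_least\<close>)
  qed (rule bslice_join_box[OF eval.caseL[OF caseL.hyps] caseL.prems])
next
  case (caseR \<sigma> e v T y \<nu> M2 \<nu>' S x M1)
  show ?case
  proof (cases "box_applies \<mu> R (TCaseR e x y T) \<or> box_applies \<mu>' R' (TCaseR e x y T)")
    case False
    then have nb: "\<not> box_applies \<mu> R (TCaseR e x y T)" "\<not> box_applies \<mu>' R' (TCaseR e x y T)"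
      by auto
    from not_box_applies_join[OF nb(1)]
    have nbj: "\<not> box_applies (join_store \<mu> \<mu>') (join_res R R') (TCaseR e x y T)" .
    from caseR.IH[OF caseR.prems] obtain \<rho>0 \<mu>0 N U \<rho>0' \<mu>0' N' U' where s:
      "bslice \<mu> R T \<rho>0 \<mu>0 N U" "le_env \<rho>0 (\<sigma>(y := v))" "le_store \<mu>0 \<nu>" "le_comp N M2" "le_trace U T"
      "bslice \<mu>' R' T \<rho>0' \<mu>0' N' U'" "le_env \<rho>0' (\<sigma>(y := v))" "le_store \<mu>0' \<nu>" "le_comp N' M2"
      "le_trace U' T"
      "bslice (join_store \<mu> \<mu>') (join_res R R') T (join_env \<rho>0 \<rho>0') (join_store \<mu>0 \<mu>0') (join_comp N N')
        (join_trace U U')"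
      by blast
    have inr: "le_val (VInr (\<rho>0 y)) (VInr v)" "le_val (VInr (\<rho>0' y)) (VInr v)"
      using le_env_apply[OF s(2), of y] le_env_apply[OF s(7), of y] by simp_all
    obtain \<rho>e a \<rho>e' a' where se: "eslice (VInr (\<rho>0 y)) e \<rho>e a" "le_env \<rho>e \<sigma>" "le_exp a e"
      and se': "eslice (VInr (\<rho>0' y)) e \<rho>e' a'" "le_env \<rho>e' \<sigma>" "le_exp a' e"
      using eslice_exists[OF caseR.hyps(1) inr(1)] eslice_exists[OF caseR.hyps(1) inr(2)] by blast
    have sej: "eslice (VInr (join_env \<rho>0 \<rho>0' y)) e (join_env \<rho>e \<rho>e') (join_exp a a')"
      using eslice_join[OF caseR.hyps(1) inr se(1) se'(1)] by (simp add: join_env_apply)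
    have bound: "le_env (\<rho>0(y := VHole)) \<sigma>" "le_env (\<rho>0'(y := VHole)) \<sigma>"
      using le_env_upd_hole s(2,7) by blast+
    have "join_env (join_env (\<rho>0(y := VHole)) \<rho>e) (join_env (\<rho>0'(y := VHole)) \<rho>e') =
        join_env ((join_env \<rho>0 \<rho>0')(y := VHole)) (join_env \<rho>e \<rho>e')"
      using join_env_interchange[OF bound(1) se(2) bound(2) se'(2)] by (simp add: join_env_upd)
    with bslice.caseR[OF nbj s(11) sej] have joined:
      "bslice (join_store \<mu> \<mu>') (join_res R R') (TCaseR e x y T)
        (join_env (join_env (\<rho>0(y := VHole)) \<rho>e) (join_env (\<rho>0'(y := VHole)) \<rho>e')) (join_store \<mu>0 \<mu>0')
        (join_comp (Case a x CHole y N) (Case a' x CHole y N'))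
        (join_trace (TCaseR a x y U) (TCaseR a' x y U'))"
      by simp
    show ?thesis
      by (rule joined_slicesI[OF bslice.caseR[OF nb(1) s(1) se(1)] _ _ _ _
            bslice.caseR[OF nb(2) s(6) se'(1)] _ _ _ _ joined])
        (use s se se' bound in \<open>auto intro: join_env_least\<close>)
  qed (rule bslice_join_box[OF eval.caseR[OF caseR.hyps] caseR.prems])
qed

theorem lemma4p7:
  assumes "eval T \<sigma> \<nu> M \<nu>' S"
    and "(\<mu>, R) \<in> Prefix_sr (\<nu>', S)"
    and "(\<mu>', R') \<in> Prefix_sr (\<nu>', S)"
  shows "bwd \<sigma> \<nu> M T (join_sr (\<mu>, R) (\<mu>', R')) =
         join_cfg (bwd \<sigma> \<nu> M T (\<mu>, R)) (bwd \<sigma> \<nu> M T (\<mu>', R'))"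
proof -
  from assms(2,3) have "le_store \<mu> \<nu>'" "le_res R S" "le_store \<mu>' \<nu>'" "le_res R' S"
    by (auto simp: Prefix_sr_def le_sr_def)
  from bslice_join[OF assms(1) this] obtain \<rho> \<mu>0 N U \<rho>' \<mu>0' N' U' where s:
    "bslice \<mu> R T \<rho> \<mu>0 N U" "le_env \<rho> \<sigma>" "le_store \<mu>0 \<nu>" "le_comp N M" "le_trace U T"
    "bslice \<mu>' R' T \<rho>' \<mu>0' N' U'" "le_env \<rho>' \<sigma>" "le_store \<mu>0' \<nu>" "le_comp N' M" "le_trace U' T"
    "bslice (join_store \<mu> \<mu>') (join_res R R') T (join_env \<rho> \<rho>') (join_store \<mu>0 \<mu>0') (join_comp N N')
      (join_trace U U')"
    by blast
  have "bwd \<sigma> \<nu> M T (\<mu>, R) = (\<rho>, \<mu>0, N, U)"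
    by (rule bwd_eqI[OF s(1-5)])
  moreover have "bwd \<sigma> \<nu> M T (\<mu>', R') = (\<rho>', \<mu>0', N', U')"
    by (rule bwd_eqI[OF s(6-10)])
  moreover have "bwd \<sigma> \<nu> M T (join_store \<mu> \<mu>', join_res R R') =
      (join_env \<rho> \<rho>', join_store \<mu>0 \<mu>0', join_comp N N', join_trace U U')"
    by (rule bwd_eqI[OF s(11) join_env_least[OF s(2,7)] join_store_least[OF s(3,8)]
          join_comp_least[OF s(4,9)] join_trace_least[OF s(5,10)]])
  ultimately show ?thesis
    by (simp add: join_sr_def join_cfg_def)
qed

end
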